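(* Let $G$ be a $V_5$-free graph with $m\ge 8$ edges. Then \[ \lambda(G)\le \frac{1+\sqrt{4m-3}}{2}, \] and equality holds if and only if $G = K_2\vee \frac{m-1}{2}K_1$ (up to isolated vertices).
   Context: All graphs are finite and simple. $\lambda(G)$ denotes the spectral radius (largest eigenvalue of the adjacency matrix) of $G$. $P_k$ is the path on $k$ vertices, $K_n$ the complete graph, $tK_1$ the edgeless graph on $t$ vertices, and $G\vee H$ the join of $G$ and $H$ (disjoint union plus all edges between $V(G)$ and $V(H)$). The fan graph is $V_k=K_1\vee P_{k-1}$; in particular $V_5=K_1\vee P_4$. A graph is $F$-free if it contains no (not necessarily induced) subgraph isomorphic to $F$. Thus $K_2\vee \frac{m-1}{2}K_1$ (which exists when $m$ is odd) has exactly $m$ edges. *)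

theory Defs
  imports Complex_Main
begin

definition simple_graph :: "'a set \<Rightarrow> 'a set set \<Rightarrow> bool" where
  "simple_graph V E \<longleftrightarrow> finite V \<and> (\<forall>e\<in>E. e \<subseteq> V \<and> card e = 2)"

definition adj :: "'a set set \<Rightarrow> 'a \<Rightarrow> 'a \<Rightarrow> real" where
  "adj E u v = (if {u, v} \<in> E then 1 else 0)"

definition adj_eigenvalue :: "'a set \<Rightarrow> 'a set set \<Rightarrow> real \<Rightarrow> bool" where
  "adj_eigenvalue V E \<mu> \<longleftrightarrow>
     (\<exists>x :: 'a \<Rightarrow> real. (\<exists>v\<in>V. x v \<noteq> 0) \<and>
        (\<forall>u\<in>V. (\<Sum>w\<in>V. adj E u w * x w) = \<mu> * x u))"

definition spectral_radius :: "'a set \<Rightarrow> 'a set set \<Rightarrow> real" where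
  "spectral_radius V E = Max {\<mu>. adj_eigenvalue V E \<mu>}"

definition contains_subgraph :: "'b set \<Rightarrow> 'b set set \<Rightarrow> 'a set \<Rightarrow> 'a set set \<Rightarrow> bool" where
  "contains_subgraph VF EF V E \<longleftrightarrow>
     (\<exists>f. inj_on f VF \<and> f ` VF \<subseteq> V \<and> (\<forall>e\<in>EF. f ` e \<in> E))"

text \<open>Fan V_5 = K_1 join P_4: centre 0, path 1-2-3-4.\<close>
definition fan5_V :: "nat set" where "fan5_V = {0,1,2,3,4}"
definition fan5_E :: "nat set set" where
  "fan5_E = {{0,1},{0,2},{0,3},{0,4},{1,2},{2,3},{3,4}}"

text \<open>K_2 join kK_1: vertices 0,1 adjacent, and 2..k+1 adjacent to both.\<close>
definition book_V :: "nat \<Rightarrow> nat set" where "book_V k = {0..<k+2}"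
definition book_E :: "nat \<Rightarrow> nat set set" where
  "book_E k = {{0,1}} \<union> {{0,i} | i. 2 \<le> i \<and> i < k+2} \<union> {{1,i} | i. 2 \<le> i \<and> i < k+2}"

definition graph_iso :: "'a set \<Rightarrow> 'a set set \<Rightarrow> 'b set \<Rightarrow> 'b set set \<Rightarrow> bool" where
  "graph_iso V E V' E' \<longleftrightarrow>
     (\<exists>f. bij_betw f V V' \<and> (\<forall>u\<in>V. \<forall>v\<in>V. {u,v} \<in> E \<longleftrightarrow> {f u, f v} \<in> E'))"

definition non_isolated :: "'a set \<Rightarrow> 'a set set \<Rightarrow> 'a set" where
  "non_isolated V E = {v\<in>V. \<exists>e\<in>E. v \<in> e}"

end

theory Submission
  imports Defs "HOL-Analysis.Analysis"
begin

text \<open>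
  Let \<open>y\<close> be a nonnegative eigenvector of \<open>\<lambda> = \<lambda>(G)\<close> whose largest entry is \<open>y u = 1\<close>, and
  let \<open>A = N(u)\<close> and \<open>B = V - N[u]\<close>. Expanding \<open>\<lambda>\<^sup>2 = \<lambda> \<cdot> \<Sum>{y w | w \<in> A}\<close> by the eigenvalue
  equations and counting edges gives \<open>\<lambda>\<^sup>2 - \<lambda> = m - S(u)\<close>, where \<open>S(u)\<close> is a sum of weights of
  the vertices of \<open>A\<close> and \<open>B\<close>, those on \<open>B\<close> being nonnegative.
  Since \<open>G\<close> contains no fan \<open>K\<^sub>1 \<or> P\<^sub>4\<close>, the link \<open>G[A]\<close> has no path on four vertices, so each
  of its components is a single vertex, a star or a triangle. After moving half a unit of
  weight from every leaf to its neighbour all weights on \<open>A\<close> are nonnegative and every star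
  with an edge carries weight at least \<open>1\<close>; hence \<open>\<lambda>\<^sup>2 - \<lambda> \<le> m - 1\<close> unless all edges of the
  link lie in triangles. In that remaining case \<open>\<lambda>\<^sup>2 - \<lambda> \<ge> m - 1\<close> is refuted numerically, using
  the eigenvalue equations at the triangle vertices and at their neighbours in \<open>B\<close>, once
  \<open>m \<ge> 8\<close>. When equality holds all these estimates are sharp: the link is a single star whose
  centre \<open>c\<close> has \<open>y c = 1\<close> and the vertices of \<open>B\<close> are isolated, so the non-isolated part of \<open>G\<close>
  is \<open>K\<^sub>2 \<or> kK\<^sub>1\<close> with spine \<open>u c\<close>. Conversely \<open>K\<^sub>2 \<or> kK\<^sub>1\<close> has the eigenvalue \<open>(1 + \<surd>(4m - 3))/2\<close>.
\<close>

lemma adj_commute: "adj E u w = adj E w u"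
  by (simp add: adj_def insert_commute)

lemma adj_nonneg: "0 \<le> adj E u w"
  by (simp add: adj_def)

lemma adj_le_1: "adj E u w \<le> 1"
  by (simp add: adj_def)

lemma adj_self: "simple_graph V E \<Longrightarrow> adj E u u = 0"
  by (auto simp: adj_def simple_graph_def)

definition quad_form :: "'a set \<Rightarrow> 'a set set \<Rightarrow> ('a \<Rightarrow> real) \<Rightarrow> real" where
  "quad_form V E x = (\<Sum>u\<in>V. \<Sum>w\<in>V. adj E u w * x u * x w)"

definition sq_norm :: "'a set \<Rightarrow> ('a \<Rightarrow> real) \<Rightarrow> real" where
  "sq_norm V x = (\<Sum>u\<in>V. (x u)^2)"

definition adj_mult :: "'a set \<Rightarrow> 'a set set \<Rightarrow> ('a \<Rightarrow> real) \<Rightarrow> 'a \<Rightarrow> real" where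
  "adj_mult V E x u = (\<Sum>w\<in>V. adj E u w * x w)"

definition vdot :: "'a set \<Rightarrow> ('a \<Rightarrow> real) \<Rightarrow> ('a \<Rightarrow> real) \<Rightarrow> real" where
  "vdot V x y = (\<Sum>u\<in>V. x u * y u)"

lemma adj_eigenvalue_iff:
  "adj_eigenvalue V E \<mu> \<longleftrightarrow> (\<exists>x. (\<exists>v\<in>V. x v \<noteq> 0) \<and> (\<forall>u\<in>V. adj_mult V E x u = \<mu> * x u))"
  by (simp add: adj_eigenvalue_def adj_mult_def)

lemma quad_form_eq_sum_adj_mult: "quad_form V E x = (\<Sum>u\<in>V. x u * adj_mult V E x u)"
  by (simp add: quad_form_def adj_mult_def sum_distrib_left mult_ac)

lemma quad_form_scale: "quad_form V E (\<lambda>v. c * x v) = c^2 * quad_form V E x"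
  by (simp add: quad_form_def sum_distrib_left power2_eq_square mult_ac)

lemma sq_norm_scale: "sq_norm V (\<lambda>v. c * x v) = c^2 * sq_norm V x"
  by (simp add: sq_norm_def sum_distrib_left power_mult_distrib)

lemma sq_norm_nonneg: "0 \<le> sq_norm V x"
  by (simp add: sq_norm_def sum_nonneg)

lemma quad_form_cong: "(\<And>v. v \<in> V \<Longrightarrow> x v = y v) \<Longrightarrow> quad_form V E x = quad_form V E y"
  by (simp add: quad_form_def)

lemma sq_norm_cong: "(\<And>v. v \<in> V \<Longrightarrow> x v = y v) \<Longrightarrow> sq_norm V x = sq_norm V y"
  by (simp add: sq_norm_def)

lemma sq_norm_eq_0D: "finite V \<Longrightarrow> sq_norm V x = 0 \<Longrightarrow> v \<in> V \<Longrightarrow> x v = 0"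
  unfolding sq_norm_def using sum_nonneg_eq_0_iff[of V "\<lambda>u. (x u)^2"] by auto

lemma sq_norm_neq_0D: "sq_norm V x \<noteq> 0 \<Longrightarrow> \<exists>v\<in>V. x v \<noteq> 0"
  unfolding sq_norm_def by (metis (mono_tags, lifting) power_zero_numeral sum.neutral)

lemma sq_norm_pos: "finite V \<Longrightarrow> v \<in> V \<Longrightarrow> x v \<noteq> 0 \<Longrightarrow> 0 < sq_norm V x"
  using sq_norm_eq_0D sq_norm_nonneg by (metis order_le_neq_trans)

lemma quad_form_le_abs: "quad_form V E x \<le> quad_form V E (\<lambda>v. \<bar>x v\<bar>)"
  unfolding quad_form_def
proof (intro sum_mono)
  fix u w
  have "x u * x w \<le> \<bar>x u\<bar> * \<bar>x w\<bar>"
    by (metis abs_ge_self abs_mult)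
  then have "adj E u w * (x u * x w) \<le> adj E u w * (\<bar>x u\<bar> * \<bar>x w\<bar>)"
    by (rule mult_left_mono) (rule adj_nonneg)
  then show "adj E u w * x u * x w \<le> adj E u w * \<bar>x u\<bar> * \<bar>x w\<bar>"
    by (simp add: mult.assoc)
qed

lemma compact_sphere_on:
  assumes "finite V"
  shows "compact {x :: 'a \<Rightarrow> real. (\<forall>v. v \<notin> V \<longrightarrow> x v = 0) \<and> sq_norm V x = 1}"
    (is "compact ?K")
proof -
  define P where "P = Pi\<^sub>E UNIV (\<lambda>v::'a. if v \<in> V then {-1..1::real} else {0})"
  have "compactin (product_topology (\<lambda>i. euclidean) UNIV) P"
    unfolding P_def by (subst compactin_PiE) auto
  then have "compact P"
    by (simp add: euclidean_product_topology)
  moreover have "closed ?K"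
  proof -
    have "closed {x :: 'a \<Rightarrow> real. \<forall>v. (if v \<in> V then 0 else 1) * x v = 0}"
      by (intro closed_Collect_all closed_Collect_eq continuous_intros continuous_on_product_coordinates)
    moreover have "closed {x :: 'a \<Rightarrow> real. sq_norm V x = 1}"
      unfolding sq_norm_def
      by (intro closed_Collect_eq continuous_intros continuous_on_product_coordinates)
    moreover have "?K = {x. \<forall>v. (if v \<in> V then 0 else 1) * x v = 0} \<inter> {x. sq_norm V x = 1}"
      by auto
    ultimately show ?thesis
      by (simp add: closed_Int)
  qed
  moreover have "?K \<subseteq> P"
  proof
    fix x :: "'a \<Rightarrow> real"
    assume x: "x \<in> ?K"
    have "x v \<in> (if v \<in> V then {-1..1} else {0})" for v
    proof (cases "v \<in> V")
      case True
      have "(x v)^2 \<le> sq_norm V x"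
        unfolding sq_norm_def by (rule member_le_sum) (use True assms in auto)
      then have "\<bar>x v\<bar> \<le> 1"
        using x by (simp add: abs_square_le_1)
      then show ?thesis
        using True by auto
    qed (use x in auto)
    then show "x \<in> P"
      unfolding P_def by auto
  qed
  ultimately show ?thesis
    using compact_Int_closed[of P ?K] by (simp add: Int_absorb1)
qed

lemma quad_form_le_if_le_on_sphere:
  assumes "finite V"
    and sphere: "\<And>z. (\<forall>v. v \<notin> V \<longrightarrow> z v = 0) \<Longrightarrow> sq_norm V z = 1 \<Longrightarrow> quad_form V E z \<le> r"
  shows "quad_form V E x \<le> r * sq_norm V x"
proof (cases "sq_norm V x = 0")
  case True
  then have "quad_form V E x = 0"
    unfolding quad_form_def using sq_norm_eq_0D[OF assms(1) True] by simp
  then show ?thesis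
    using True by simp
next
  case False
  then have pos: "sq_norm V x > 0"
    using sq_norm_nonneg[of V x] by simp
  define c where "c = 1 / sqrt (sq_norm V x)"
  define x' where "x' = (\<lambda>v. if v \<in> V then c * x v else 0)"
  have c2: "c^2 = 1 / sq_norm V x"
    using pos by (simp add: c_def power_divide)
  have "sq_norm V x' = sq_norm V (\<lambda>v. c * x v)"
    by (rule sq_norm_cong) (simp add: x'_def)
  then have "sq_norm V x' = 1"
    using pos c2 by (simp add: sq_norm_scale)
  then have "quad_form V E x' \<le> r"
    by (intro sphere) (simp_all add: x'_def)
  moreover have "quad_form V E x' = quad_form V E (\<lambda>v. c * x v)"
    by (rule quad_form_cong) (simp add: x'_def)
  then have "quad_form V E x' = quad_form V E x / sq_norm V x"
    by (simp add: quad_form_scale c2)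
  ultimately show ?thesis
    using pos by (simp add: divide_le_eq mult.commute)
qed

lemma quad_form_attains_max:
  assumes simple: "simple_graph V E" and ne: "V \<noteq> {}"
  obtains z where "sq_norm V z = 1" "\<And>x. quad_form V E x \<le> quad_form V E z * sq_norm V x"
proof -
  have finite_V: "finite V"
    using simple by (simp add: simple_graph_def)
  define K where "K = {x :: 'a \<Rightarrow> real. (\<forall>v. v \<notin> V \<longrightarrow> x v = 0) \<and> sq_norm V x = 1}"
  obtain v0 where v0: "v0 \<in> V"
    using ne by auto
  have "(if v = v0 then 1 else 0 :: real)^2 = (if v = v0 then 1 else 0)" for v
    by simp
  then have "(\<lambda>v. if v = v0 then 1 else 0) \<in> K"
    using v0 finite_V by (simp add: K_def sq_norm_def)
  then have "K \<noteq> {}"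
    by auto
  moreover have "continuous_on K (quad_form V E)"
    unfolding quad_form_def
    by (intro continuous_intros continuous_on_product_coordinates[THEN continuous_on_subset]) auto
  moreover have "compact K"
    unfolding K_def by (rule compact_sphere_on[OF finite_V])
  ultimately obtain z where zK: "z \<in> K" and zmax: "\<And>y. y \<in> K \<Longrightarrow> quad_form V E y \<le> quad_form V E z"
    using continuous_attains_sup[of K "quad_form V E"] by auto
  have "quad_form V E x \<le> quad_form V E z * sq_norm V x" for x
    using zmax by (intro quad_form_le_if_le_on_sphere[OF finite_V]) (simp add: K_def)
  moreover have "sq_norm V z = 1"
    using zK by (simp add: K_def)
  ultimately show ?thesis
    using that by blast
qed

lemma quad_form_add_point:
  assumes simple: "simple_graph V E" and v: "v \<in> V"
  shows "quad_form V E (\<lambda>w. z w + (if w = v then t else 0))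
           = quad_form V E z + 2 * t * adj_mult V E z v"
proof -
  have finite_V: "finite V"
    using simple by (simp add: simple_graph_def)
  have "(\<Sum>w\<in>V. if u = v then t * (adj E u w * z w) else 0) = (if u = v then t * adj_mult V E z v else 0)"
    for u by (simp add: adj_mult_def sum_distrib_left)
  then have row: "(\<Sum>u\<in>V. \<Sum>w\<in>V. if u = v then t * (adj E u w * z w) else 0) = t * adj_mult V E z v"
    using finite_V v by (simp add: sum.delta)
  have col: "(\<Sum>u\<in>V. \<Sum>w\<in>V. if w = v then t * (adj E u w * z u) else 0) = t * adj_mult V E z v"
    using finite_V v by (simp add: adj_mult_def sum_distrib_left sum.delta' adj_commute[of E _ v])
  have diag: "(\<Sum>u\<in>V. \<Sum>w\<in>V. if u = v \<and> w = v then t * t * adj E u w else 0) = 0"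
    using adj_self[OF simple] by (auto intro!: sum.neutral)
  have "quad_form V E (\<lambda>w. z w + (if w = v then t else 0))
      = (\<Sum>u\<in>V. \<Sum>w\<in>V. adj E u w * z u * z w
              + (if u = v then t * (adj E u w * z w) else 0)
              + (if w = v then t * (adj E u w * z u) else 0)
              + (if u = v \<and> w = v then t * t * adj E u w else 0))"
    unfolding quad_form_def by (intro sum.cong refl) (auto simp: algebra_simps)
  then show ?thesis
    using row col diag by (simp add: sum.distrib quad_form_def)
qed

lemma sq_norm_add_point:
  assumes "finite V" and "v \<in> V"
  shows "sq_norm V (\<lambda>w. z w + (if w = v then t else 0)) = sq_norm V z + 2 * t * z v + t^2"
proof -
  have "sq_norm V (\<lambda>w. z w + (if w = v then t else 0))
      = (\<Sum>u\<in>V. (z u)^2 + (if u = v then 2 * t * z u + t^2 else 0))"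
    unfolding sq_norm_def by (intro sum.cong refl) (simp add: power2_eq_square algebra_simps)
  then show ?thesis
    using assms by (simp add: sum.distrib sq_norm_def)
qed

lemma linear_le_quadratic_imp_0:
  fixes d r :: real
  assumes "\<And>t. 2 * t * d \<le> r * t^2"
  shows "d = 0"
proof (rule ccontr)
  assume "d \<noteq> 0"
  define s where "s = 1 / (\<bar>r\<bar> + 1)"
  have s0: "s > 0"
    by (simp add: s_def add_pos_nonneg)
  have "r < \<bar>r\<bar> + 1"
    by linarith
  then have "r * s < 1"
    by (simp add: s_def divide_less_eq)
  have "2 * (s * d) * d \<le> r * (s * d)^2"
    by (rule assms)
  then have "2 * (s * d^2) \<le> (r * s) * (s * d^2)"
    by (simp add: power2_eq_square algebra_simps)
  moreover have "s * d^2 > 0"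
    using \<open>d \<noteq> 0\<close> s0 by simp
  ultimately have "2 \<le> r * s"
    by (simp add: mult_le_cancel_right_pos)
  with \<open>r * s < 1\<close> show False
    by simp
qed

text \<open>A maximiser of the Rayleigh quotient is an eigenvector: perturbing it in the direction
  of a single vertex may not increase the quotient.\<close>

lemma quad_form_max_eigenvector:
  assumes simple: "simple_graph V E"
    and le: "\<And>x. quad_form V E x \<le> r * sq_norm V x"
    and eq: "quad_form V E z = r * sq_norm V z"
    and v: "v \<in> V"
  shows "adj_mult V E z v = r * z v"
proof -
  have finite_V: "finite V"
    using simple by (simp add: simple_graph_def)
  have "2 * t * (adj_mult V E z v - r * z v) \<le> r * t^2" for t
    using le[of "\<lambda>w. z w + (if w = v then t else 0)"] eq
    by (simp add: quad_form_add_point[OF simple v] sq_norm_add_point[OF finite_V v] algebra_simps)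
  then show ?thesis
    using linear_le_quadratic_imp_0 by fastforce
qed

lemma eigenvectors_orthogonal:
  assumes x: "\<forall>u\<in>V. adj_mult V E x u = \<mu> * x u" and y: "\<forall>u\<in>V. adj_mult V E y u = \<nu> * y u"
    and ne: "\<mu> \<noteq> \<nu>"
  shows "vdot V x y = 0"
proof -
  have "\<mu> * vdot V x y = (\<Sum>u\<in>V. adj_mult V E x u * y u)"
    unfolding vdot_def sum_distrib_left using x by (intro sum.cong) auto
  also have "\<dots> = (\<Sum>u\<in>V. \<Sum>w\<in>V. adj E u w * x w * y u)"
    unfolding adj_mult_def by (simp add: sum_distrib_right)
  also have "\<dots> = (\<Sum>w\<in>V. \<Sum>u\<in>V. adj E w u * y u * x w)"
    by (subst sum.swap) (simp add: adj_commute mult_ac)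
  also have "\<dots> = (\<Sum>w\<in>V. adj_mult V E y w * x w)"
    unfolding adj_mult_def by (simp add: sum_distrib_right)
  also have "\<dots> = \<nu> * vdot V x y"
    unfolding vdot_def sum_distrib_left using y by (intro sum.cong) auto
  finally show ?thesis
    using ne by simp
qed

lemma eigenvalue_le_quad_form_bound:
  assumes "finite V" and "adj_eigenvalue V E \<mu>" and le: "\<And>x. quad_form V E x \<le> r * sq_norm V x"
  shows "\<mu> \<le> r"
proof -
  obtain x v where "v \<in> V" "x v \<noteq> 0" and eq: "\<forall>u\<in>V. adj_mult V E x u = \<mu> * x u"
    using assms(2) unfolding adj_eigenvalue_iff by blast
  then have pos: "sq_norm V x > 0"
    using sq_norm_pos[OF assms(1)] by blast
  have "quad_form V E x = (\<Sum>u\<in>V. x u * (\<mu> * x u))"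
    unfolding quad_form_eq_sum_adj_mult using eq by (intro sum.cong) auto
  also have "\<dots> = \<mu> * sq_norm V x"
    unfolding sq_norm_def by (simp add: sum_distrib_left power2_eq_square mult_ac)
  finally show ?thesis
    using le[of x] pos by simp
qed

lemma orthonormal_coordinate_bound:
  assumes "finite V" and "finite F" and v: "v \<in> V"
    and orthonormal: "\<And>\<mu> \<nu>. \<mu> \<in> F \<Longrightarrow> \<nu> \<in> F \<Longrightarrow> vdot V (X \<mu>) (X \<nu>) = (if \<mu> = \<nu> then 1 else 0)"
  shows "(\<Sum>\<mu>\<in>F. (X \<mu> v)^2) \<le> 1"
proof -
  define s where "s = (\<Sum>\<mu>\<in>F. (X \<mu> v)^2)"
  define g where "g w = (\<Sum>\<mu>\<in>F. X \<mu> v * X \<mu> w)" for w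
  have gg: "(\<Sum>w\<in>V. (g w)^2) = s"
  proof -
    have "(\<Sum>w\<in>V. (g w)^2) = (\<Sum>w\<in>V. \<Sum>\<mu>\<in>F. \<Sum>\<nu>\<in>F. X \<mu> v * X \<nu> v * (X \<mu> w * X \<nu> w))"
      unfolding g_def power2_eq_square sum_product by (simp add: mult_ac)
    also have "\<dots> = (\<Sum>\<mu>\<in>F. \<Sum>\<nu>\<in>F. X \<mu> v * X \<nu> v * vdot V (X \<mu>) (X \<nu>))"
      unfolding vdot_def sum_distrib_left by (subst sum.swap) (simp add: sum.swap[of _ V])
    also have "\<dots> = (\<Sum>\<mu>\<in>F. \<Sum>\<nu>\<in>F. (if \<nu> = \<mu> then X \<mu> v * X \<mu> v else 0))"
      by (intro sum.cong refl) (auto simp: orthonormal)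
    also have "\<dots> = s"
      unfolding s_def using \<open>finite F\<close> by (simp add: power2_eq_square)
    finally show ?thesis .
  qed
  have "0 \<le> (\<Sum>w\<in>V. ((if w = v then 1 else 0) - g w)^2)"
    by (intro sum_nonneg) auto
  also have "\<dots> = (\<Sum>w\<in>V. (if w = v then 1 - 2 * g w else 0) + (g w)^2)"
    by (intro sum.cong refl) (auto simp: power2_eq_square algebra_simps)
  also have "\<dots> = 1 - 2 * g v + s"
    using assms(1) v gg by (simp add: sum.distrib sum.delta')
  also have "g v = s"
    unfolding g_def s_def by (simp add: power2_eq_square)
  finally show ?thesis
    unfolding s_def by simp
qed

text \<open>Normalised eigenvectors of distinct eigenvalues are orthonormal, so by the coordinate
  form of Bessel's inequality there are at most \<open>card V\<close> of them.\<close>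

lemma finite_adj_eigenvalues:
  assumes simple: "simple_graph V E"
  shows "finite {\<mu>. adj_eigenvalue V E \<mu>}"
proof (rule ccontr)
  assume inf: "infinite {\<mu>. adj_eigenvalue V E \<mu>}"
  have finite_V: "finite V"
    using simple by (simp add: simple_graph_def)
  define Y where "Y \<mu> = (SOME x. (\<exists>v\<in>V. x v \<noteq> 0) \<and> (\<forall>u\<in>V. adj_mult V E x u = \<mu> * x u))" for \<mu>
  define X where "X \<mu> = (\<lambda>v. Y \<mu> v / sqrt (sq_norm V (Y \<mu>)))" for \<mu>
  have Y: "(\<exists>v\<in>V. Y \<mu> v \<noteq> 0) \<and> (\<forall>u\<in>V. adj_mult V E (Y \<mu>) u = \<mu> * Y \<mu> u)"
    if "adj_eigenvalue V E \<mu>" for \<mu>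
    using that unfolding Y_def adj_eigenvalue_iff by (rule someI_ex)
  have X_eigen: "\<forall>u\<in>V. adj_mult V E (X \<mu>) u = \<mu> * X \<mu> u" if "adj_eigenvalue V E \<mu>" for \<mu>
    using Y[OF that] unfolding X_def adj_mult_def
    by (simp add: sum_divide_distrib[symmetric] mult.assoc)
  have X_norm: "vdot V (X \<mu>) (X \<mu>) = 1" if "adj_eigenvalue V E \<mu>" for \<mu>
  proof -
    have "sq_norm V (Y \<mu>) > 0"
      using Y[OF that] sq_norm_pos[OF finite_V] by blast
    moreover have "vdot V (X \<mu>) (X \<mu>) = sq_norm V (Y \<mu>) / (sqrt (sq_norm V (Y \<mu>)))^2"
      unfolding vdot_def X_def sq_norm_def by (simp add: sum_divide_distrib power2_eq_square)
    ultimately show ?thesis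
      by simp
  qed
  obtain F where F: "F \<subseteq> {\<mu>. adj_eigenvalue V E \<mu>}" "finite F" "card F = card V + 1"
    using infinite_arbitrarily_large[OF inf] by blast
  have orthonormal: "vdot V (X \<mu>) (X \<nu>) = (if \<mu> = \<nu> then 1 else 0)" if "\<mu> \<in> F" "\<nu> \<in> F" for \<mu> \<nu>
  proof -
    have "adj_eigenvalue V E \<mu>" "adj_eigenvalue V E \<nu>"
      using that F(1) by auto
    then show ?thesis
      using X_norm eigenvectors_orthogonal[OF X_eigen X_eigen] by (cases "\<mu> = \<nu>") auto
  qed
  have "real (card F) = (\<Sum>\<mu>\<in>F. vdot V (X \<mu>) (X \<mu>))"
    using orthonormal by simp
  also have "\<dots> = (\<Sum>v\<in>V. \<Sum>\<mu>\<in>F. (X \<mu> v)^2)"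
    unfolding vdot_def by (subst sum.swap) (simp add: power2_eq_square)
  also have "\<dots> \<le> (\<Sum>v\<in>V. 1)"
    by (intro sum_mono orthonormal_coordinate_bound[OF finite_V F(2)] orthonormal) auto
  finally show False
    using F(3) by simp
qed

lemma spectral_radius_quad_form_bound:
  assumes simple: "simple_graph V E" and ne: "V \<noteq> {}"
  obtains z where "sq_norm V z = 1" "quad_form V E z = spectral_radius V E"
    "\<And>x. quad_form V E x \<le> spectral_radius V E * sq_norm V x"
proof -
  have finite_V: "finite V"
    using simple by (simp add: simple_graph_def)
  obtain z where zn: "sq_norm V z = 1" and le: "\<And>x. quad_form V E x \<le> quad_form V E z * sq_norm V x"
    using quad_form_attains_max[OF simple ne] by blast
  have "\<exists>v\<in>V. z v \<noteq> 0"
    using zn sq_norm_neq_0D[of V z] by simp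
  moreover have "\<forall>u\<in>V. adj_mult V E z u = quad_form V E z * z u"
    using quad_form_max_eigenvector[OF simple le] zn by simp
  ultimately have "adj_eigenvalue V E (quad_form V E z)"
    unfolding adj_eigenvalue_iff by blast
  then have "spectral_radius V E = quad_form V E z"
    unfolding spectral_radius_def using eigenvalue_le_quad_form_bound[OF finite_V _ le]
    by (intro Max_eqI finite_adj_eigenvalues[OF simple]) auto
  then show ?thesis
    using that zn le by simp
qed

lemma eigenvalue_le_spectral_radius:
  assumes "simple_graph V E" and "V \<noteq> {}" and "adj_eigenvalue V E \<mu>"
  shows "\<mu> \<le> spectral_radius V E"
proof -
  obtain z where "\<And>x. quad_form V E x \<le> spectral_radius V E * sq_norm V x"
    using spectral_radius_quad_form_bound[OF assms(1,2)] by blast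
  moreover have "finite V"
    using assms(1) by (simp add: simple_graph_def)
  ultimately show ?thesis
    using eigenvalue_le_quad_form_bound assms(3) by blast
qed

lemma spectral_radius_normalized_eigenvector:
  assumes simple: "simple_graph V E" and ne: "V \<noteq> {}"
  obtains y u where "u \<in> V" "y u = 1" "\<And>v. 0 \<le> y v" "\<And>v. v \<in> V \<Longrightarrow> y v \<le> 1"
    "\<And>v. v \<in> V \<Longrightarrow> (\<Sum>w\<in>V. adj E v w * y w) = spectral_radius V E * y v"
proof -
  have finite_V: "finite V"
    using simple by (simp add: simple_graph_def)
  obtain z where zn: "sq_norm V z = 1" and zr: "quad_form V E z = spectral_radius V E"
    and le: "\<And>x. quad_form V E x \<le> spectral_radius V E * sq_norm V x"
    using spectral_radius_quad_form_bound[OF simple ne] by blast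
  define M where "M = Max ((\<lambda>v. \<bar>z v\<bar>) ` V)"
  have "M \<in> (\<lambda>v. \<bar>z v\<bar>) ` V"
    unfolding M_def using finite_V ne by simp
  then obtain u where u: "u \<in> V" "\<bar>z u\<bar> = M"
    by auto
  have z_le_M: "\<bar>z v\<bar> \<le> M" if "v \<in> V" for v
    unfolding M_def using finite_V that by simp
  have "M > 0"
  proof -
    obtain v where "v \<in> V" "z v \<noteq> 0"
      using zn sq_norm_neq_0D[of V z] by auto
    then show ?thesis
      using z_le_M[of v] by simp
  qed
  have "quad_form V E (\<lambda>v. \<bar>z v\<bar>) = spectral_radius V E * sq_norm V (\<lambda>v. \<bar>z v\<bar>)"
    using quad_form_le_abs[of V E z] le[of "\<lambda>v. \<bar>z v\<bar>"] zr zn by (simp add: sq_norm_def)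
  then have eigen: "adj_mult V E (\<lambda>v. \<bar>z v\<bar>) v = spectral_radius V E * \<bar>z v\<bar>" if "v \<in> V" for v
    using quad_form_max_eigenvector[OF simple le _ that] by simp
  show ?thesis
  proof (rule that[of u "\<lambda>v. \<bar>z v\<bar> / M"])
    fix v assume "v \<in> V"
    then show "\<bar>z v\<bar> / M \<le> 1" "(\<Sum>w\<in>V. adj E v w * (\<bar>z w\<bar> / M)) = spectral_radius V E * (\<bar>z v\<bar> / M)"
      using eigen z_le_M \<open>M > 0\<close> by (simp_all add: adj_mult_def sum_divide_distrib[symmetric])
  qed (use u \<open>M > 0\<close> in auto)
qed

locale finite_simple_graph =
  fixes V :: "'a set" and E :: "'a set set"
  assumes simple: "simple_graph V E"
begin

definition nbrs :: "'a \<Rightarrow> 'a set" where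
  "nbrs v = {w\<in>V. {v,w} \<in> E}"

definition non_nbrs :: "'a \<Rightarrow> 'a set" where
  "non_nbrs u = V - insert u (nbrs u)"

definition deg_in :: "'a set \<Rightarrow> 'a \<Rightarrow> real" where
  "deg_in X v = (\<Sum>w\<in>X. adj E v w)"

lemma finite_V: "finite V"
  using simple by (simp add: simple_graph_def)

lemma finite_subset_V: "X \<subseteq> V \<Longrightarrow> finite X"
  using finite_V finite_subset by blast

lemma finite_E: "finite E"
  using simple finite_V unfolding simple_graph_def
  by (meson Pow_iff finite_Pow_iff finite_subset subsetI)

lemma edge_card_subset: "e \<in> E \<Longrightarrow> card e = 2 \<and> e \<subseteq> V"
  using simple by (simp add: simple_graph_def)

lemma edge_in_V: "{v,w} \<in> E \<Longrightarrow> v \<in> V \<and> w \<in> V"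
  using edge_card_subset by blast

lemma edge_distinct: "{v,w} \<in> E \<Longrightarrow> v \<noteq> w"
  using edge_card_subset by fastforce

lemma nbrs_subset: "nbrs v \<subseteq> V"
  by (auto simp: nbrs_def)

lemma finite_nbrs: "finite (nbrs v)"
  using finite_subset_V[OF nbrs_subset] .

lemma nbrs_iff: "w \<in> nbrs v \<longleftrightarrow> {v,w} \<in> E"
  using edge_in_V by (auto simp: nbrs_def)

lemma nbrs_sym: "w \<in> nbrs v \<longleftrightarrow> v \<in> nbrs w"
  by (simp add: nbrs_iff insert_commute)

lemma not_self_nbr: "v \<notin> nbrs v"
  using edge_card_subset[of "{v}"] by (auto simp: nbrs_iff)

lemma adj_nbrs: "adj E v w = (if w \<in> nbrs v then 1 else 0)"
  by (simp add: adj_def nbrs_iff)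

lemma sum_adj_nbrs: "X \<subseteq> V \<Longrightarrow> (\<Sum>w\<in>X. adj E v w * f w) = (\<Sum>w\<in>X \<inter> nbrs v. f w)"
  using finite_subset_V[of X] by (simp add: adj_nbrs sum.If_cases Int_def if_distrib[of "\<lambda>t. t * f _"])

lemma deg_in_card: "X \<subseteq> V \<Longrightarrow> deg_in X v = real (card (X \<inter> nbrs v))"
  using sum_adj_nbrs[of X v "\<lambda>_. 1"] by (simp add: deg_in_def)

lemma deg_in_nonneg: "0 \<le> deg_in X v"
  by (simp add: deg_in_def sum_nonneg adj_nonneg)

lemma deg_in_eq_0_iff: "X \<subseteq> V \<Longrightarrow> deg_in X v = 0 \<longleftrightarrow> X \<inter> nbrs v = {}"
  using deg_in_card[of X v] finite_subset_V[of X] by simp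

lemma sum_deg_in_0_or_ge_1:
  assumes "X \<subseteq> V"
  shows "(\<Sum>x\<in>Y. deg_in X x) = 0 \<or> (\<Sum>x\<in>Y. deg_in X x) \<ge> 1"
proof -
  have "(\<Sum>x\<in>Y. deg_in X x) = real (\<Sum>x\<in>Y. card (X \<inter> nbrs x))"
    using deg_in_card[OF assms] by simp
  then show ?thesis
    by (cases "\<Sum>x\<in>Y. card (X \<inter> nbrs x)") auto
qed

lemma sum_nbrs_swap:
  fixes f :: "'a \<Rightarrow> 'a \<Rightarrow> real"
  assumes "X \<subseteq> V" "Y \<subseteq> V"
  shows "(\<Sum>w\<in>X. \<Sum>z\<in>Y \<inter> nbrs w. f w z) = (\<Sum>z\<in>Y. \<Sum>w\<in>X \<inter> nbrs z. f w z)"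
proof -
  have "(\<Sum>w\<in>X. \<Sum>z\<in>Y \<inter> nbrs w. f w z) = (\<Sum>w\<in>X. \<Sum>z\<in>Y. adj E w z * f w z)"
    using assms by (simp add: sum_adj_nbrs)
  also have "\<dots> = (\<Sum>z\<in>Y. \<Sum>w\<in>X. adj E z w * f w z)"
    by (subst sum.swap) (simp add: adj_commute)
  also have "\<dots> = (\<Sum>z\<in>Y. \<Sum>w\<in>X \<inter> nbrs z. f w z)"
    using assms by (simp add: sum_adj_nbrs)
  finally show ?thesis .
qed

lemma card_ordered_pairs_of_edge:
  assumes "e \<in> E"
  shows "card {p \<in> V \<times> V. {fst p, snd p} = e} = 2"
proof -
  obtain a b where ab: "e = {a,b}" "a \<noteq> b"
    using edge_card_subset[OF assms] by (meson card_2_iff)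
  have "a \<in> V" "b \<in> V"
    using edge_card_subset[OF assms] ab by auto
  then have "{p \<in> V \<times> V. {fst p, snd p} = e} = {(a,b),(b,a)}"
    using ab by (auto simp: doubleton_eq_iff)
  then show ?thesis
    using ab by simp
qed

lemma handshake: "(\<Sum>v\<in>V. deg_in V v) = 2 * real (card E)"
proof -
  define P where "P = {p \<in> V \<times> V. {fst p, snd p} \<in> E}"
  have "(\<Sum>v\<in>V. deg_in V v) = real (\<Sum>v\<in>V. card (nbrs v))"
    using nbrs_subset by (simp add: deg_in_card Int_absorb1)
  also have "(\<Sum>v\<in>V. card (nbrs v)) = card (SIGMA v:V. nbrs v)"
    using finite_V finite_nbrs by (simp add: card_SigmaI)
  also have "(SIGMA v:V. nbrs v) = (\<Union>e\<in>E. {p \<in> V \<times> V. {fst p, snd p} = e})"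
    unfolding nbrs_def by auto
  also have "card \<dots> = (\<Sum>e\<in>E. card {p \<in> V \<times> V. {fst p, snd p} = e})"
    using finite_E finite_V by (intro card_UN_disjoint) auto
  also have "\<dots> = (\<Sum>e\<in>E. 2)"
    using card_ordered_pairs_of_edge by simp
  finally show ?thesis
    by simp
qed

lemma non_nbrs_subset: "non_nbrs u \<subseteq> V"
  by (auto simp: non_nbrs_def)

lemma finite_non_nbrs: "finite (non_nbrs u)"
  using finite_subset_V[OF non_nbrs_subset] .

lemma nbrs_non_nbrs_disjoint: "nbrs u \<inter> non_nbrs u = {}"
  by (auto simp: non_nbrs_def)

lemma not_self_non_nbr: "u \<notin> non_nbrs u"
  by (simp add: non_nbrs_def)

lemma V_split: "u \<in> V \<Longrightarrow> V = insert u (nbrs u \<union> non_nbrs u)"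
  using nbrs_subset by (auto simp: non_nbrs_def)

lemma V_cases:
  assumes "u \<in> V" "v \<in> V"
  obtains "v = u" | "v \<in> nbrs u" | "v \<in> non_nbrs u"
  using V_split[OF assms(1)] assms(2) by blast

lemma sum_V_split:
  fixes f :: "'a \<Rightarrow> real"
  assumes u: "u \<in> V"
  shows "(\<Sum>v\<in>V. f v) = f u + (\<Sum>v\<in>nbrs u. f v) + (\<Sum>v\<in>non_nbrs u. f v)"
proof -
  have "(\<Sum>v\<in>V. f v) = f u + (\<Sum>v\<in>nbrs u \<union> non_nbrs u. f v)"
    using V_split[OF u] finite_nbrs finite_non_nbrs not_self_nbr not_self_non_nbr
    by (metis finite_UnI sum.insert UnE)
  also have "(\<Sum>v\<in>nbrs u \<union> non_nbrs u. f v) = (\<Sum>v\<in>nbrs u. f v) + (\<Sum>v\<in>non_nbrs u. f v)"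
    using finite_nbrs finite_non_nbrs nbrs_non_nbrs_disjoint by (rule sum.union_disjoint)
  finally show ?thesis
    by simp
qed

lemma adj_from_nbr: "w \<in> nbrs u \<Longrightarrow> adj E w u = 1"
  by (simp add: adj_nbrs nbrs_sym)

lemma adj_from_non_nbr: "z \<in> non_nbrs u \<Longrightarrow> adj E z u = 0"
  by (auto simp: adj_nbrs non_nbrs_def nbrs_sym)

lemma edge_to_nbr: "w \<in> nbrs u \<Longrightarrow> {u,w} \<in> E"
  by (simp add: nbrs_iff)

lemma deg_split: "u \<in> V \<Longrightarrow> deg_in V w = adj E w u + deg_in (nbrs u) w + deg_in (non_nbrs u) w"
  unfolding deg_in_def using sum_V_split[of u "\<lambda>z. adj E w z"] by simp

lemma card_edges_split:
  assumes u: "u \<in> V"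
  shows "2 * real (card E) = 2 * real (card (nbrs u)) + (\<Sum>z\<in>nbrs u. deg_in (nbrs u) z)
       + 2 * (\<Sum>z\<in>non_nbrs u. deg_in (nbrs u) z) + (\<Sum>z\<in>non_nbrs u. deg_in (non_nbrs u) z)"
proof -
  have "2 * real (card E) = deg_in V u + (\<Sum>w\<in>nbrs u. deg_in V w) + (\<Sum>z\<in>non_nbrs u. deg_in V z)"
    using handshake sum_V_split[OF u, of "deg_in V"] by simp
  also have "deg_in V u = real (card (nbrs u))"
    using deg_in_card[of V u] nbrs_subset by (simp add: Int_absorb1)
  also have "(\<Sum>w\<in>nbrs u. deg_in V w) = (\<Sum>w\<in>nbrs u. 1 + deg_in (nbrs u) w + deg_in (non_nbrs u) w)"
    using deg_split[OF u] adj_from_nbr by (intro sum.cong) auto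
  also have "(\<Sum>z\<in>non_nbrs u. deg_in V z) = (\<Sum>z\<in>non_nbrs u. deg_in (nbrs u) z + deg_in (non_nbrs u) z)"
    using deg_split[OF u] adj_from_non_nbr by (intro sum.cong) auto
  finally have "2 * real (card E) = real (card (nbrs u))
      + (\<Sum>w\<in>nbrs u. 1 + deg_in (nbrs u) w + deg_in (non_nbrs u) w)
      + (\<Sum>z\<in>non_nbrs u. deg_in (nbrs u) z + deg_in (non_nbrs u) z)" .
  moreover have "(\<Sum>w\<in>nbrs u. deg_in (non_nbrs u) w) = (\<Sum>z\<in>non_nbrs u. deg_in (nbrs u) z)"
    unfolding deg_in_def by (subst sum.swap) (simp add: adj_commute)
  ultimately show ?thesis
    by (simp add: sum.distrib)
qed

text \<open>\<open>link_nbrs u z\<close> is the neighbourhood of \<open>z\<close> in the link \<open>G[N(u)]\<close> of \<open>u\<close>.\<close>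

definition link_nbrs :: "'a \<Rightarrow> 'a \<Rightarrow> 'a set" where
  "link_nbrs u z = nbrs u \<inter> nbrs z"

lemma finite_link_nbrs: "finite (link_nbrs u z)"
  unfolding link_nbrs_def using finite_nbrs by simp

lemma link_nbrs_subset: "link_nbrs u z \<subseteq> nbrs u"
  by (simp add: link_nbrs_def)

lemma not_self_link_nbr: "z \<notin> link_nbrs u z"
  by (simp add: link_nbrs_def not_self_nbr)

lemma link_nbrs_sym: "w \<in> link_nbrs u z \<Longrightarrow> z \<in> nbrs u \<Longrightarrow> z \<in> link_nbrs u w"
  by (auto simp: link_nbrs_def nbrs_sym)

lemma link_nbrs_edge: "w \<in> link_nbrs u z \<Longrightarrow> {z,w} \<in> E"
  by (simp add: link_nbrs_def nbrs_iff)

lemma deg_nbrs_eq_card_link: "deg_in (nbrs u) z = real (card (link_nbrs u z))"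
  using deg_in_card[OF nbrs_subset] by (simp add: link_nbrs_def)

end

locale bounded_eigenvector = finite_simple_graph +
  fixes y :: "'a \<Rightarrow> real" and lam :: real
  assumes eigen: "\<And>v. v \<in> V \<Longrightarrow> (\<Sum>w\<in>V. adj E v w * y w) = lam * y v"
    and y_nonneg: "\<And>v. 0 \<le> y v"
    and y_le_1: "\<And>v. v \<in> V \<Longrightarrow> y v \<le> 1"
begin

text \<open>If \<open>y u = 1\<close>, then \<open>defect u = m - (\<lambda>\<^sup>2 - \<lambda>)\<close> by \<open>eigenvalue_defect_identity\<close>.\<close>

definition link_weight :: "'a \<Rightarrow> 'a \<Rightarrow> real" where
  "link_weight u z = deg_in (nbrs u) z / 2 - (deg_in (nbrs u) z - 1) * y z"

definition outer_weight :: "'a \<Rightarrow> 'a \<Rightarrow> real" where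
  "outer_weight u z = deg_in (nbrs u) z * (1 - y z) + deg_in (non_nbrs u) z / 2"

definition defect :: "'a \<Rightarrow> real" where
  "defect u = (\<Sum>z\<in>nbrs u. link_weight u z) + (\<Sum>z\<in>non_nbrs u. outer_weight u z)"

lemma eigen_nbrs: "v \<in> V \<Longrightarrow> (\<Sum>w\<in>nbrs v. y w) = lam * y v"
  using eigen[of v] sum_adj_nbrs[of V v y] nbrs_subset by (simp add: Int_absorb1)

lemma eigenvalue_sum_nbrs: "u \<in> V \<Longrightarrow> y u = 1 \<Longrightarrow> lam = (\<Sum>w\<in>nbrs u. y w)"
  using eigen_nbrs[of u] by simp

lemma eigenvalue_nonneg: "u \<in> V \<Longrightarrow> y u = 1 \<Longrightarrow> 0 \<le> lam"
  using eigenvalue_sum_nbrs[of u] y_nonneg by (simp add: sum_nonneg)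

lemma eigen_split:
  "u \<in> V \<Longrightarrow> w \<in> V \<Longrightarrow>
   lam * y w = adj E w u * y u + (\<Sum>z\<in>nbrs u. adj E w z * y z) + (\<Sum>z\<in>non_nbrs u. adj E w z * y z)"
  using eigen[of w] sum_V_split[of u "\<lambda>z. adj E w z * y z"] by simp

lemma eigen_non_nbr:
  assumes u: "u \<in> V" and x: "x \<in> non_nbrs u"
  shows "lam * y x = (\<Sum>z\<in>nbrs u. adj E x z * y z) + (\<Sum>z\<in>non_nbrs u. adj E x z * y z)"
proof -
  have "x \<in> V"
    using x non_nbrs_subset by blast
  then show ?thesis
    using eigen_split[OF u] adj_from_non_nbr[OF x] by simp
qed

lemma sum_adj_le_deg_in: "X \<subseteq> V \<Longrightarrow> (\<Sum>z\<in>X. adj E x z * y z) \<le> deg_in X x"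
  unfolding deg_in_def using y_le_1 by (intro sum_mono) (auto intro!: mult_left_le simp: adj_nonneg)

lemma sum_deg_in_y_bounds:
  "0 \<le> (\<Sum>x\<in>non_nbrs u. deg_in X x * y x)"
  "(\<Sum>x\<in>non_nbrs u. deg_in X x * y x) \<le> (\<Sum>x\<in>non_nbrs u. deg_in X x)"
  using deg_in_nonneg y_nonneg y_le_1[OF subsetD[OF non_nbrs_subset]]
  by (auto intro!: sum_nonneg sum_mono mult_nonneg_nonneg mult_left_le)

lemma outer_weight_nonneg: "z \<in> non_nbrs u \<Longrightarrow> 0 \<le> outer_weight u z"
  using y_le_1[of z] non_nbrs_subset deg_in_nonneg[of "nbrs u" z] deg_in_nonneg[of "non_nbrs u" z]
  unfolding outer_weight_def by (intro add_nonneg_nonneg mult_nonneg_nonneg) auto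

text \<open>Expand \<open>\<lambda>\<^sup>2 = \<lambda> \<cdot> \<Sum>{y w | w \<in> N(u)}\<close> by the eigenvalue equations at the neighbours
  of \<open>u\<close> and compare with the edge count of \<open>card_edges_split\<close>.\<close>

lemma eigenvalue_defect_identity:
  assumes u: "u \<in> V" and yu: "y u = 1"
  shows "lam^2 - lam = real (card E) - defect u"
proof -
  have l1: "lam = (\<Sum>w\<in>nbrs u. y w)"
    by (rule eigenvalue_sum_nbrs[OF u yu])
  have "lam^2 = (\<Sum>w\<in>nbrs u. lam * y w)"
    using l1 by (simp add: power2_eq_square sum_distrib_left)
  also have "\<dots> = (\<Sum>w\<in>nbrs u. 1 + (\<Sum>z\<in>nbrs u. adj E w z * y z) + (\<Sum>z\<in>non_nbrs u. adj E w z * y z))"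
  proof (intro sum.cong refl)
    fix w assume w: "w \<in> nbrs u"
    then have "w \<in> V"
      using nbrs_subset by blast
    then show "lam * y w = 1 + (\<Sum>z\<in>nbrs u. adj E w z * y z) + (\<Sum>z\<in>non_nbrs u. adj E w z * y z)"
      using eigen_split[OF u] adj_from_nbr[OF w] yu by simp
  qed
  also have "\<dots> = real (card (nbrs u)) + (\<Sum>w\<in>nbrs u. \<Sum>z\<in>nbrs u. adj E w z * y z)
                  + (\<Sum>w\<in>nbrs u. \<Sum>z\<in>non_nbrs u. adj E w z * y z)"
    by (simp add: sum.distrib)
  also have "(\<Sum>w\<in>nbrs u. \<Sum>z\<in>nbrs u. adj E w z * y z) = (\<Sum>z\<in>nbrs u. deg_in (nbrs u) z * y z)"
    unfolding deg_in_def sum_distrib_right by (subst sum.swap) (simp add: adj_commute)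
  also have "(\<Sum>w\<in>nbrs u. \<Sum>z\<in>non_nbrs u. adj E w z * y z) = (\<Sum>z\<in>non_nbrs u. deg_in (nbrs u) z * y z)"
    unfolding deg_in_def sum_distrib_right by (subst sum.swap) (simp add: adj_commute)
  finally have l2: "lam^2 = real (card (nbrs u)) + (\<Sum>z\<in>nbrs u. deg_in (nbrs u) z * y z)
      + (\<Sum>z\<in>non_nbrs u. deg_in (nbrs u) z * y z)" .
  show ?thesis
    unfolding defect_def link_weight_def outer_weight_def
    using l1 l2 card_edges_split[OF u]
    by (simp add: sum.distrib sum_subtractf sum_divide_distrib[symmetric] algebra_simps)
qed

lemma defect_le_1:
  "u \<in> V \<Longrightarrow> y u = 1 \<Longrightarrow> real (card E) - 1 \<le> lam^2 - lam \<Longrightarrow> defect u \<le> 1"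
  using eigenvalue_defect_identity by force

lemma eigenvalue_gt_3:
  assumes "8 \<le> card E" and "real (card E) - 1 \<le> lam^2 - lam" and "0 \<le> lam"
  shows "lam > 3"
proof (rule ccontr)
  assume "\<not> lam > 3"
  then have "lam * lam \<le> 3 * lam"
    using assms(3) by (intro mult_right_mono) auto
  then show False
    using assms(1,2) \<open>\<not> lam > 3\<close> by (simp add: power2_eq_square)
qed

end

lemma card_ge_2_obtain_other:
  assumes "finite X" "card X \<ge> 2" "x \<in> X"
  obtains x' where "x' \<in> X" "x' \<noteq> x"
proof -
  have "\<not> X \<subseteq> {x}"
    using assms(2) card_mono[of "{x}" X] by auto
  then show ?thesis
    using that by blast
qed

locale fan_free_graph = finite_simple_graph +
  assumes fan_free: "\<not> contains_subgraph fan5_V fan5_E V E"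
begin

lemma no_fan:
  assumes e: "{c,p1} \<in> E" "{c,p2} \<in> E" "{c,p3} \<in> E" "{c,p4} \<in> E"
     "{p1,p2} \<in> E" "{p2,p3} \<in> E" "{p3,p4} \<in> E"
    and d: "p1 \<noteq> p3" "p1 \<noteq> p4" "p2 \<noteq> p4"
  shows False
proof -
  have ne: "c \<noteq> p1" "c \<noteq> p2" "c \<noteq> p3" "c \<noteq> p4" "p1 \<noteq> p2" "p2 \<noteq> p3" "p3 \<noteq> p4"
    using e edge_distinct by blast+
  have inV: "c \<in> V" "p1 \<in> V" "p2 \<in> V" "p3 \<in> V" "p4 \<in> V"
    using e edge_in_V by blast+
  define f where "f = (\<lambda>i::nat. if i = 0 then c else if i = 1 then p1 else if i = 2 then p2
                          else if i = 3 then p3 else p4)"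
  have "contains_subgraph fan5_V fan5_E V E"
    unfolding contains_subgraph_def
  proof (intro exI[of _ f] conjI)
    show "inj_on f fan5_V"
      unfolding fan5_V_def inj_on_def f_def using ne d by auto
    show "f ` fan5_V \<subseteq> V"
      unfolding fan5_V_def f_def using inV by auto
    show "\<forall>e\<in>fan5_E. f ` e \<in> E"
      unfolding fan5_E_def f_def using e by (auto simp: insert_commute)
  qed
  then show False
    using fan_free by simp
qed

text \<open>Together with \<open>u\<close>, a path on four vertices in the link of \<open>u\<close> would be a fan.\<close>

lemma link_no_path4:
  assumes "p1 \<in> nbrs u" "p2 \<in> link_nbrs u p1" "p3 \<in> link_nbrs u p2" "p4 \<in> link_nbrs u p3"
    and "p1 \<noteq> p3" "p1 \<noteq> p4" "p2 \<noteq> p4"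
  shows False
proof (rule no_fan[of u p1 p2 p3 p4])
  have "p2 \<in> nbrs u" "p3 \<in> nbrs u" "p4 \<in> nbrs u"
    using assms(2-4) link_nbrs_subset by blast+
  then show "{u,p1} \<in> E" "{u,p2} \<in> E" "{u,p3} \<in> E" "{u,p4} \<in> E"
    using assms(1) edge_to_nbr by blast+
  show "{p1,p2} \<in> E" "{p2,p3} \<in> E" "{p3,p4} \<in> E"
    using assms(2-4) link_nbrs_edge by blast+
qed (use assms in auto)

definition link_triangle :: "'a \<Rightarrow> 'a \<Rightarrow> bool" where
  "link_triangle u z \<longleftrightarrow> (\<exists>a b. a \<noteq> b \<and> link_nbrs u z = {a,b} \<and> {a,b} \<in> E
     \<and> link_nbrs u a = {z,b} \<and> link_nbrs u b = {z,a})"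

definition star_centre :: "'a \<Rightarrow> 'a \<Rightarrow> bool" where
  "star_centre u z \<longleftrightarrow> card (link_nbrs u z) \<ge> 2 \<and> (\<forall>w\<in>link_nbrs u z. card (link_nbrs u w) = 1)"

lemma link_triangleI:
  assumes z: "z \<in> nbrs u" and w: "w \<in> link_nbrs u z"
    and cz: "card (link_nbrs u z) \<ge> 2" and cw: "card (link_nbrs u w) \<ge> 2"
  shows "link_triangle u z"
proof -
  have wA: "w \<in> nbrs u"
    using w link_nbrs_subset by blast
  have zw: "z \<in> link_nbrs u w"
    using link_nbrs_sym[OF w z] .
  obtain a where a: "a \<in> link_nbrs u w" "a \<noteq> z"
    using card_ge_2_obtain_other[OF finite_link_nbrs cw zw] by blast
  have closes: "b = a'" if "b \<in> link_nbrs u z" "a' \<in> link_nbrs u w" "b \<noteq> w" "a' \<noteq> z" for b a'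
    using link_no_path4[of b u z w a'] link_nbrs_sym[OF that(1) z] link_nbrs_subset that w by blast
  have aA: "a \<in> nbrs u" and aw: "a \<noteq> w"
    using a link_nbrs_subset not_self_link_nbr by blast+
  have NAz: "link_nbrs u z = {w,a}"
  proof
    show "link_nbrs u z \<subseteq> {w,a}"
      using closes[OF _ a(1) _ a(2)] by blast
    obtain b where "b \<in> link_nbrs u z" "b \<noteq> w"
      using card_ge_2_obtain_other[OF finite_link_nbrs cz w] by blast
    then show "{w,a} \<subseteq> link_nbrs u z"
      using w closes[OF _ a(1) _ a(2)] by auto
  qed
  have NAw: "link_nbrs u w = {z,a}"
    using closes[of a] NAz aw zw a(1) by blast
  have NAa: "link_nbrs u a = {z,w}"
  proof
    have "z \<in> link_nbrs u a"
      using link_nbrs_sym[of a u z] NAz z by simp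
    then show "link_nbrs u a \<subseteq> {z,w}"
      using link_no_path4[of _ u a z w] link_nbrs_sym[of _ u a] link_nbrs_subset aA w aw by blast
    show "{z,w} \<subseteq> link_nbrs u a"
      using link_nbrs_sym[of a u z] link_nbrs_sym[of a u w] z wA NAz NAw by auto
  qed
  moreover have "{w,a} \<in> E"
    using link_nbrs_edge[OF a(1)] .
  ultimately show ?thesis
    unfolding link_triangle_def using aw NAz NAw
    by (intro exI[of _ w] exI[of _ a]) (simp add: eq_commute[of w a])
qed

lemma link_triangleE:
  assumes "link_triangle u z"
  obtains a b where "a \<noteq> b" "link_nbrs u z = {a,b}" "{a,b} \<in> E" "link_nbrs u a = {z,b}"
    "link_nbrs u b = {z,a}" "z \<noteq> a" "z \<noteq> b"
proof -
  obtain a b where ab: "a \<noteq> b" "link_nbrs u z = {a,b}" "{a,b} \<in> E" "link_nbrs u a = {z,b}"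
    "link_nbrs u b = {z,a}"
    using assms unfolding link_triangle_def by blast
  moreover have "z \<noteq> a" "z \<noteq> b"
    using ab(2) not_self_link_nbr[of z u] by auto
  ultimately show ?thesis
    by (rule that)
qed

lemma card_link_nbrs_triangle: "link_triangle u z \<Longrightarrow> card (link_nbrs u z) = 2"
  by (elim link_triangleE) simp

lemma link_triangle_nbr:
  assumes t: "link_triangle u z" and w: "w \<in> link_nbrs u z"
  shows "link_triangle u w"
proof -
  obtain a b where ab: "a \<noteq> b" "link_nbrs u z = {a,b}" "{a,b} \<in> E" "link_nbrs u a = {z,b}"
    "link_nbrs u b = {z,a}" "z \<noteq> a" "z \<noteq> b"
    using t by (rule link_triangleE)
  have za: "{z,a} \<in> E" "{z,b} \<in> E"
    using ab(2) link_nbrs_edge[of _ u z] by auto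
  have "w = a \<or> w = b"
    using w ab(2) by auto
  then show ?thesis
    unfolding link_triangle_def
  proof
    assume "w = a"
    then show "\<exists>c d. c \<noteq> d \<and> link_nbrs u w = {c,d} \<and> {c,d} \<in> E \<and> link_nbrs u c = {w,d} \<and> link_nbrs u d = {w,c}"
      using ab za by (intro exI[of _ z] exI[of _ b] conjI) (simp_all add: insert_commute)
  next
    assume "w = b"
    then show "\<exists>c d. c \<noteq> d \<and> link_nbrs u w = {c,d} \<and> {c,d} \<in> E \<and> link_nbrs u c = {w,d} \<and> link_nbrs u d = {w,c}"
      using ab za by (intro exI[of _ z] exI[of _ a] conjI) (simp_all add: insert_commute)
  qed
qed

text \<open>The link of \<open>u\<close> has no path on four vertices, so each of its vertices is isolated,
  a leaf, the centre of a star, or in a triangle component.\<close>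

lemma link_vertex_cases:
  assumes z: "z \<in> nbrs u"
  obtains (isolated) "link_nbrs u z = {}"
    | (leaf) w where "link_nbrs u z = {w}"
    | (centre) "star_centre u z"
    | (triangle) "link_triangle u z"
proof -
  consider "card (link_nbrs u z) = 0" | "card (link_nbrs u z) = 1" | "card (link_nbrs u z) \<ge> 2"
    by linarith
  then show ?thesis
  proof cases
    case 3
    show ?thesis
    proof (cases "star_centre u z")
      case False
      then obtain w where w: "w \<in> link_nbrs u z" "card (link_nbrs u w) \<noteq> 1"
        using 3 by (auto simp: star_centre_def)
      have "link_nbrs u w \<noteq> {}"
        using link_nbrs_sym[OF w(1) z] by blast
      then have "card (link_nbrs u w) \<noteq> 0"
        using finite_link_nbrs[of u w] by simp
      then have "card (link_nbrs u w) \<ge> 2"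
        using w(2) by linarith
      then show ?thesis
        using triangle link_triangleI[OF z w(1) 3] by blast
    qed (use centre in blast)
  next
    case 1
    then show ?thesis
      using isolated finite_link_nbrs by simp
  next
    case 2
    then show ?thesis
      using leaf by (metis card_1_singletonE)
  qed
qed

text \<open>The only link neighbour \<open>w\<close> of a leaf \<open>z\<close> is a leaf or a star centre: if it had a
  second neighbour, \<open>w\<close> would lie in a triangle, which has no leaves.\<close>

lemma leaf_nbr_is_star_centre:
  assumes z: "z \<in> nbrs u" and w: "link_nbrs u z = {w}" and cw: "card (link_nbrs u w) \<noteq> 1"
  shows "star_centre u w"
proof -
  have wA: "w \<in> nbrs u"
    using w link_nbrs_subset by blast
  have zw: "z \<in> link_nbrs u w"
    using link_nbrs_sym[of w u z] w z by simp
  show ?thesis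
  using wA proof (cases rule: link_vertex_cases)
    case triangle
    then show ?thesis
      using link_triangle_nbr[OF triangle zw] card_link_nbrs_triangle w by fastforce
  qed (use zw cw in auto)
qed

text \<open>A vertex outside \<open>N[u]\<close> has at most one neighbour in a triangle of the link: two
  neighbours \<open>p, q\<close> in a triangle \<open>p q r\<close> would give the fan with centre \<open>p\<close> and path \<open>x q u r\<close>.\<close>

lemma no_common_outer_nbr:
  assumes p: "p \<in> nbrs u" and q: "q \<in> nbrs u" and r: "r \<in> nbrs u"
    and pq: "{p,q} \<in> E" and qr: "{q,r} \<in> E" and pr: "{p,r} \<in> E"
    and x: "x \<in> non_nbrs u" and xp: "{x,p} \<in> E" and xq: "{x,q} \<in> E"
  shows False
proof (rule no_fan[of p x q u r])
  have "{u,p} \<in> E" "{u,q} \<in> E" "{u,r} \<in> E"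
    using p q r edge_to_nbr by auto
  then show "{p,x} \<in> E" "{p,q} \<in> E" "{p,u} \<in> E" "{p,r} \<in> E" "{x,q} \<in> E" "{q,u} \<in> E" "{u,r} \<in> E"
    using xp xq pq pr by (auto simp: insert_commute)
  show "x \<noteq> u" "x \<noteq> r"
    using x r not_self_non_nbr nbrs_non_nbrs_disjoint by blast+
  show "q \<noteq> r"
    using qr edge_distinct by blast
qed

definition triangle_vertices :: "'a \<Rightarrow> 'a set" where
  "triangle_vertices u = {w\<in>nbrs u. link_triangle u w}"

lemma finite_triangle_vertices: "finite (triangle_vertices u)"
  using finite_nbrs by (simp add: triangle_vertices_def)

lemma triangle_vertices_subset: "triangle_vertices u \<subseteq> nbrs u"
  by (auto simp: triangle_vertices_def)

lemma link_nbrs_triangle_vertices: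
  "w \<in> triangle_vertices u \<Longrightarrow> link_nbrs u w \<subseteq> triangle_vertices u"
  using link_triangle_nbr link_nbrs_subset[of u w] by (auto simp: triangle_vertices_def)

lemma triangle_partners_not_outer_nbrs:
  assumes w: "w \<in> triangle_vertices u" and x: "x \<in> non_nbrs u" and xw: "w \<in> nbrs x"
  shows "link_nbrs u w \<inter> nbrs x = {}"
proof -
  have wA: "w \<in> nbrs u" and tw: "link_triangle u w"
    using w by (auto simp: triangle_vertices_def)
  obtain a b where ab: "a \<noteq> b" "link_nbrs u w = {a,b}" "{a,b} \<in> E" "link_nbrs u a = {w,b}"
    "link_nbrs u b = {w,a}" "w \<noteq> a" "w \<noteq> b"
    using tw by (rule link_triangleE)
  have abA: "a \<in> nbrs u" "b \<in> nbrs u"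
    using ab(2) link_nbrs_subset by blast+
  have wab: "{w,a} \<in> E" "{w,b} \<in> E"
    using ab(2) link_nbrs_edge[of _ u w] by auto
  have xw': "{x,w} \<in> E"
    using xw by (simp add: nbrs_iff)
  have "a \<notin> nbrs x"
    using no_common_outer_nbr[OF wA abA wab(1) ab(3) wab(2) x xw'] by (auto simp: nbrs_iff)
  moreover have "b \<notin> nbrs x"
    using no_common_outer_nbr[OF wA abA(2,1) wab(2) _ wab(1) x xw'] ab(3)
    by (auto simp: nbrs_iff insert_commute)
  ultimately show ?thesis
    using ab(2) by auto
qed

lemma link_nbrs_disjoint_outer_nbrs:
  assumes x: "x \<in> non_nbrs u"
    and w: "w \<in> triangle_vertices u \<inter> nbrs x" and w': "w' \<in> triangle_vertices u \<inter> nbrs x"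
    and "w \<noteq> w'"
  shows "link_nbrs u w \<inter> link_nbrs u w' = {}"
proof (rule ccontr)
  assume "link_nbrs u w \<inter> link_nbrs u w' \<noteq> {}"
  then obtain c where c: "c \<in> link_nbrs u w" "c \<in> link_nbrs u w'"
    by blast
  have tw: "link_triangle u w" and w'A: "w' \<in> nbrs u"
    using w w' by (auto simp: triangle_vertices_def)
  obtain a b where ab: "a \<noteq> b" "link_nbrs u w = {a,b}" "{a,b} \<in> E" "link_nbrs u a = {w,b}"
    "link_nbrs u b = {w,a}" "w \<noteq> a" "w \<noteq> b"
    using tw by (rule link_triangleE)
  have "w' \<in> link_nbrs u c"
    using link_nbrs_sym[OF c(2) w'A] .
  then have "w' \<in> link_nbrs u w"
    using c(1) ab \<open>w \<noteq> w'\<close> by auto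
  then show False
    using triangle_partners_not_outer_nbrs[of w u x] w w' x by auto
qed

text \<open>Each triangle of the link meets \<open>N(x)\<close> in at most one vertex, so every neighbour of \<open>x\<close>
  among the triangle vertices comes with two partners that are not neighbours of \<open>x\<close>.\<close>

lemma card_triangle_nbrs_bound:
  assumes x: "x \<in> non_nbrs u"
  shows "3 * card (triangle_vertices u \<inter> nbrs x) \<le> card (triangle_vertices u)"
proof -
  define P where "P = triangle_vertices u \<inter> nbrs x"
  define Q where "Q = (\<Union>w\<in>P. link_nbrs u w)"
  have finP: "finite P"
    using finite_triangle_vertices by (simp add: P_def)
  have finQ: "finite Q"
    using finP finite_link_nbrs by (simp add: Q_def)
  have card2: "card (link_nbrs u w) = 2" if "w \<in> P" for w
    using that card_link_nbrs_triangle by (auto simp: P_def triangle_vertices_def)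
  have "card Q = (\<Sum>w\<in>P. card (link_nbrs u w))"
    unfolding Q_def using finP finite_link_nbrs link_nbrs_disjoint_outer_nbrs[OF x]
    by (intro card_UN_disjoint) (auto simp: P_def)
  then have "card Q = 2 * card P"
    using card2 by simp
  moreover have "P \<inter> Q = {}"
    using triangle_partners_not_outer_nbrs[OF _ x] by (auto simp: P_def Q_def)
  moreover have "P \<union> Q \<subseteq> triangle_vertices u"
    using link_nbrs_triangle_vertices by (auto simp: P_def Q_def)
  ultimately show ?thesis
    using card_Un_disjoint[OF finP finQ] card_mono[OF finite_triangle_vertices, of "P \<union> Q"]
    by (simp add: P_def)
qed

lemma link_triangle_component_eq:
  assumes "link_triangle u z" and "c \<in> insert z (link_nbrs u z)"
  shows "insert c (link_nbrs u c) = insert z (link_nbrs u z)"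
proof -
  obtain a b where ab: "a \<noteq> b" "link_nbrs u z = {a,b}" "{a,b} \<in> E" "link_nbrs u a = {z,b}"
    "link_nbrs u b = {z,a}" "z \<noteq> a" "z \<noteq> b"
    using assms(1) by (rule link_triangleE)
  then consider "c = z" | "c = a" | "c = b"
    using assms(2) by auto
  then show ?thesis
    by cases (use ab in \<open>auto simp: insert_commute\<close>)
qed

lemma link_triangle_component_subset:
  assumes "link_triangle u z" and "z \<in> nbrs u"
  shows "insert z (link_nbrs u z) \<subseteq> triangle_vertices u"
  using assms link_triangle_nbr link_nbrs_subset[of u z] by (auto simp: triangle_vertices_def)

lemma card_link_triangle_component:
  "link_triangle u z \<Longrightarrow> card (insert z (link_nbrs u z)) = 3"
  by (elim link_triangleE) simp

lemma card_triangle_vertices_ge_6: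
  assumes z: "z \<in> nbrs u" "link_triangle u z" and z': "z' \<in> nbrs u" "link_triangle u z'"
    and "z' \<notin> insert z (link_nbrs u z)"
  shows "6 \<le> card (triangle_vertices u)"
proof -
  define K where "K = insert z (link_nbrs u z)"
  define K' where "K' = insert z' (link_nbrs u z')"
  have "K \<inter> K' = {}"
  proof (rule ccontr)
    assume "K \<inter> K' \<noteq> {}"
    then obtain c where "c \<in> K" "c \<in> K'"
      by blast
    then have "K' = K"
      using link_triangle_component_eq[OF z(2)] link_triangle_component_eq[OF z'(2)]
      by (metis K_def K'_def)
    moreover have "z' \<in> K'"
      by (simp add: K'_def)
    ultimately have "z' \<in> K"
      by simp
    then show False
      using assms(5) by (simp add: K_def)
  qed
  moreover have "K \<union> K' \<subseteq> triangle_vertices u"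
    using link_triangle_component_subset z z' by (simp add: K_def K'_def)
  moreover have "card K = 3" "card K' = 3"
    using card_link_triangle_component z(2) z'(2) by (simp_all add: K_def K'_def)
  moreover have "finite K" "finite K'"
    using finite_link_nbrs by (simp_all add: K_def K'_def)
  ultimately show ?thesis
    using card_mono[OF finite_triangle_vertices, of "K \<union> K'"] card_Un_disjoint[of K K'] by simp
qed

lemma link_nbrs_of_triangle_vertex:
  assumes w: "w \<in> nbrs u" "link_triangle u w" and ab: "link_nbrs u w = {a,b}" "link_nbrs u a = {w,b}"
  shows "link_nbrs w a = {u,b}"
proof
  have aA: "a \<in> nbrs u"
    using ab(1) link_nbrs_subset by blast
  show "link_nbrs w a \<subseteq> {u,b}"
  proof
    fix v assume v: "v \<in> link_nbrs w a"
    then have vw: "v \<in> nbrs w" and va: "v \<in> nbrs a"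
      by (auto simp: link_nbrs_def)
    have "u \<in> V" "v \<in> V"
      using w(1) vw edge_in_V nbrs_iff by blast+
    then show "v \<in> {u,b}"
    proof (cases rule: V_cases)
      case 2
      then have "v \<in> link_nbrs u a"
        using va by (simp add: link_nbrs_def nbrs_sym)
      then show ?thesis
        using ab(2) vw not_self_nbr by auto
    next
      case 3
      have "w \<in> triangle_vertices u"
        using w by (simp add: triangle_vertices_def)
      then have "link_nbrs u w \<inter> nbrs v = {}"
        using triangle_partners_not_outer_nbrs[OF _ 3] vw by (simp add: nbrs_sym)
      then show ?thesis
        using ab(1) va by (auto simp: nbrs_sym)
    qed simp
  qed
  show "{u,b} \<subseteq> link_nbrs w a"
    using w(1) aA ab link_nbrs_subset[of u w] by (auto simp: link_nbrs_def nbrs_sym)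
qed

lemma link_triangle_at_triangle_vertex:
  assumes w: "w \<in> nbrs u" "link_triangle u w"
  shows "link_triangle w u"
proof -
  obtain a b where ab: "a \<noteq> b" "link_nbrs u w = {a,b}" "{a,b} \<in> E" "link_nbrs u a = {w,b}"
    "link_nbrs u b = {w,a}" "w \<noteq> a" "w \<noteq> b"
    using w(2) by (rule link_triangleE)
  have "link_nbrs w u = {a,b}"
    using ab(2) by (auto simp: link_nbrs_def)
  moreover have "link_nbrs w a = {u,b}" "link_nbrs w b = {u,a}"
    using link_nbrs_of_triangle_vertex[OF w] ab(2,4,5) by (auto simp: insert_commute)
  ultimately show ?thesis
    unfolding link_triangle_def using ab(1,3) by blast
qed

end

locale fan_free_eigenvector = bounded_eigenvector + fan_free_graph V E
begin

text \<open>Moving half a unit of \<open>link_weight\<close> from every leaf of the link to its neighbour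
  leaves the total unchanged and makes the weight of every vertex nonnegative.\<close>

definition leaf_ind :: "'a \<Rightarrow> 'a \<Rightarrow> real" where
  "leaf_ind u w = (if card (link_nbrs u w) = 1 then 1 else 0)"

definition shifted_weight :: "'a \<Rightarrow> 'a \<Rightarrow> real" where
  "shifted_weight u z = link_weight u z + (\<Sum>w\<in>link_nbrs u z. leaf_ind u w - leaf_ind u z) / 2"

definition link_has_non_triangle :: "'a \<Rightarrow> bool" where
  "link_has_non_triangle u \<longleftrightarrow> (\<exists>z\<in>nbrs u. link_nbrs u z \<noteq> {} \<and> \<not> link_triangle u z)"

lemma sum_shifted_weight: "(\<Sum>z\<in>nbrs u. shifted_weight u z) = (\<Sum>z\<in>nbrs u. link_weight u z)"
proof -
  have "(\<Sum>z\<in>nbrs u. \<Sum>w\<in>nbrs u \<inter> nbrs z. leaf_ind u w) = (\<Sum>w\<in>nbrs u. \<Sum>z\<in>nbrs u \<inter> nbrs w. leaf_ind u w)"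
    using sum_nbrs_swap[OF nbrs_subset nbrs_subset, of "\<lambda>z w. leaf_ind u w"] .
  then have "(\<Sum>z\<in>nbrs u. \<Sum>w\<in>link_nbrs u z. leaf_ind u w - leaf_ind u z) = 0"
    unfolding link_nbrs_def by (simp add: sum_subtractf)
  then show ?thesis
    unfolding shifted_weight_def by (simp add: sum.distrib sum_divide_distrib[symmetric])
qed

lemma shifted_weight_formula:
  "shifted_weight u z = real (card (link_nbrs u z)) / 2 - (real (card (link_nbrs u z)) - 1) * y z
     + ((\<Sum>w\<in>link_nbrs u z. leaf_ind u w) - real (card (link_nbrs u z)) * leaf_ind u z) / 2"
  unfolding shifted_weight_def link_weight_def deg_nbrs_eq_card_link by (simp add: sum_subtractf)

lemma shifted_weight_isolated: "link_nbrs u z = {} \<Longrightarrow> shifted_weight u z = y z"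
  by (simp add: shifted_weight_formula)

lemma shifted_weight_leaf: "link_nbrs u z = {w} \<Longrightarrow> shifted_weight u z = leaf_ind u w / 2"
  by (simp add: shifted_weight_formula leaf_ind_def)

lemma shifted_weight_star_centre:
  assumes "star_centre u z"
  shows "shifted_weight u z = real (card (link_nbrs u z)) - (real (card (link_nbrs u z)) - 1) * y z"
proof -
  have "(\<Sum>w\<in>link_nbrs u z. leaf_ind u w) = real (card (link_nbrs u z))"
    using assms by (simp add: star_centre_def leaf_ind_def)
  then show ?thesis
    using assms by (simp add: star_centre_def shifted_weight_formula leaf_ind_def)
qed

lemma shifted_weight_triangle:
  assumes "link_triangle u z"
  shows "shifted_weight u z = 1 - y z"
proof -
  obtain a b where ab: "a \<noteq> b" "link_nbrs u z = {a,b}" "{a,b} \<in> E" "link_nbrs u a = {z,b}"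
    "link_nbrs u b = {z,a}" "z \<noteq> a" "z \<noteq> b"
    using assms by (rule link_triangleE)
  then have "(\<Sum>w\<in>link_nbrs u z. leaf_ind u w) = 0"
    by (simp add: leaf_ind_def)
  then show ?thesis
    using assms by (simp add: shifted_weight_formula leaf_ind_def card_link_nbrs_triangle)
qed

lemma shifted_weight_star_centre_ge_1:
  assumes "star_centre u z" and "y z \<le> 1"
  shows "1 \<le> shifted_weight u z"
proof -
  have "(real (card (link_nbrs u z)) - 1) * y z \<le> (real (card (link_nbrs u z)) - 1) * 1"
    using assms by (intro mult_left_mono) (auto simp: star_centre_def)
  then show ?thesis
    using shifted_weight_star_centre[OF assms(1)] by simp
qed

lemma shifted_weight_nonneg:
  assumes z: "z \<in> nbrs u"
  shows "0 \<le> shifted_weight u z"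
proof -
  have "y z \<le> 1"
    using z nbrs_subset y_le_1 by blast
  with z show ?thesis
  proof (cases rule: link_vertex_cases)
    case isolated
    then show ?thesis
      using shifted_weight_isolated y_nonneg by simp
  next
    case (leaf w)
    then show ?thesis
      using shifted_weight_leaf[OF leaf] by (simp add: leaf_ind_def split: if_splits)
  next
    case centre
    then show ?thesis
      using shifted_weight_star_centre_ge_1 \<open>y z \<le> 1\<close> by fastforce
  next
    case triangle
    then show ?thesis
      using shifted_weight_triangle \<open>y z \<le> 1\<close> by simp
  qed
qed

lemma shifted_weight_le_sum:
  "W \<subseteq> nbrs u \<Longrightarrow> (\<Sum>z\<in>W. shifted_weight u z) \<le> (\<Sum>z\<in>nbrs u. shifted_weight u z)"
  using shifted_weight_nonneg by (intro sum_mono2 finite_nbrs) auto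

text \<open>A link component that is not a triangle or a single vertex is a star: either its centre
  alone, or both ends of a single edge, carry weight at least \<open>1\<close>.\<close>

lemma sum_shifted_weight_ge_1:
  assumes "link_has_non_triangle u"
  shows "1 \<le> (\<Sum>z\<in>nbrs u. shifted_weight u z)"
proof -
  obtain z where z: "z \<in> nbrs u" "link_nbrs u z \<noteq> {}" "\<not> link_triangle u z"
    using assms link_has_non_triangle_def by blast
  have star_ge_1: "1 \<le> (\<Sum>z\<in>nbrs u. shifted_weight u z)" if "c \<in> nbrs u" "star_centre u c" for c
  proof -
    have "1 \<le> shifted_weight u c"
      using shifted_weight_star_centre_ge_1 that y_le_1 nbrs_subset by blast
    then show ?thesis
      using shifted_weight_le_sum[of "{c}" u] that by simp
  qed
  from z(1) show ?thesis
  proof (cases rule: link_vertex_cases)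
    case (leaf w)
    have wA: "w \<in> nbrs u"
      using leaf link_nbrs_subset by blast
    have zw: "z \<in> link_nbrs u w"
      using link_nbrs_sym[of w u z] leaf z(1) by simp
    show ?thesis
    proof (cases "card (link_nbrs u w) = 1")
      case True
      then have "link_nbrs u w = {z}"
        using zw by (metis card_1_singletonE singletonD)
      then have "shifted_weight u z = 1/2" "shifted_weight u w = 1/2"
        using shifted_weight_leaf leaf True by (simp_all add: leaf_ind_def)
      moreover have "z \<noteq> w"
        using leaf not_self_link_nbr by blast
      ultimately show ?thesis
        using shifted_weight_le_sum[of "{z,w}" u] z(1) wA by simp
    next
      case False
      then show ?thesis
        using star_ge_1 wA leaf_nbr_is_star_centre[OF z(1) leaf] by blast
    qed
  qed (use z star_ge_1 in auto)
qed

lemma defect_eq_shifted: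
  "defect u = (\<Sum>z\<in>nbrs u. shifted_weight u z) + (\<Sum>z\<in>non_nbrs u. outer_weight u z)"
  by (simp add: defect_def sum_shifted_weight)

lemma defect_ge_1: "link_has_non_triangle u \<Longrightarrow> 1 \<le> defect u"
  using sum_shifted_weight_ge_1[of u] sum_nonneg[of "non_nbrs u" "outer_weight u"] outer_weight_nonneg
  by (fastforce simp: defect_eq_shifted)

lemma eigen_nbr:
  assumes u: "u \<in> V" and yu: "y u = 1" and k: "k \<in> nbrs u"
  shows "lam * y k = 1 + (\<Sum>w\<in>link_nbrs u k. y w) + (\<Sum>x\<in>non_nbrs u. adj E k x * y x)"
proof -
  have "k \<in> V"
    using k nbrs_subset by blast
  moreover have "(\<Sum>w\<in>nbrs u. adj E k w * y w) = (\<Sum>w\<in>link_nbrs u k. y w)"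
    using sum_adj_nbrs[OF nbrs_subset] by (simp add: link_nbrs_def)
  ultimately show ?thesis
    using eigen_split[OF u] adj_from_nbr[OF k] yu by simp
qed

lemma y_pos_nbr:
  assumes u: "u \<in> V" and yu: "y u = 1" and w: "w \<in> nbrs u"
  shows "0 < y w"
proof -
  have "0 \<le> (\<Sum>v\<in>link_nbrs u w. y v)" "0 \<le> (\<Sum>x\<in>non_nbrs u. adj E w x * y x)"
    using y_nonneg adj_nonneg by (auto intro!: sum_nonneg mult_nonneg_nonneg)
  then have "lam * y w \<ge> 1"
    using eigen_nbr[OF u yu w] by linarith
  then show ?thesis
    using y_nonneg[of w] by (cases "y w = 0") auto
qed

end

lemma one_triangle_key_bound:
  fixes L YT YI n bT bI r e eb :: real
  assumes Lsum: "L = YT + YI" and ET: "L * YT = 3 + 2 * YT + bT" and EI: "L * YI = n + bI"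
    and L3: "L > 3" and Hm: "5 + n + r + e + eb \<le> L^2 - L"
  shows "L^2 - 10 + (L - 2) * (r + e + eb - bI) \<le> L * bT"
proof -
  have e1: "(L - 2) * YI = (L - 2) * L - 3 - bT"
    using ET Lsum by (simp add: algebra_simps)
  have "(L - 2) * n = (L - 2) * (L * YI) - (L - 2) * bI"
    using EI by (simp add: algebra_simps)
  also have "(L - 2) * (L * YI) = L * ((L - 2) * YI)"
    by (simp add: algebra_simps)
  finally have e2: "(L - 2) * n = L * ((L - 2) * L - 3 - bT) - (L - 2) * bI"
    using e1 by simp
  have "(L - 2) * (5 + n + r + e + eb) \<le> (L - 2) * (L^2 - L)"
    using Hm L3 by (intro mult_left_mono) auto
  then have "(L - 2) * (5 + r + e + eb) + (L - 2) * n \<le> (L - 2) * (L^2 - L)"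
    by (simp add: algebra_simps)
  then have "(L - 2) * (5 + r + e + eb) + L * ((L - 2) * L - 3 - bT) - (L - 2) * bI
              \<le> (L - 2) * (L^2 - L)"
    using e2 by simp
  then show ?thesis
    by (simp add: algebra_simps power2_eq_square power3_eq_cube)
qed

lemma one_triangle_numerics:
  fixes L YT YI n bT bI r e eb m :: real
  assumes Lsum: "L = YT + YI" and ET: "L * YT = 3 + 2 * YT + bT" and EI: "L * YI = n + bI"
    and M: "m = 6 + n + r + e + eb" and F3: "L * bT \<le> r + e + 2 * eb"
    and "YT \<le> 3" "0 \<le> bT" "bT \<le> r" "bI \<le> e" "0 \<le> eb"
    and r01: "r = 0 \<or> r \<ge> 1" and n012: "n = 0 \<and> YI = 0 \<or> n = 1 \<or> n \<ge> 2"
    and L3: "L > 3" and "8 \<le> m" and H: "m - 1 \<le> L^2 - L"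
  shows False
proof -
  have Hm: "5 + n + r + e + eb \<le> L^2 - L"
    using H M by simp
  note K = one_triangle_key_bound[OF Lsum ET EI L3 Hm]
  have "(L - 2) * (e - bI) \<ge> 0"
    using \<open>bI \<le> e\<close> L3 by simp
  then have star: "L - 5 + n + (L - 2) * r + (L - 3) * eb \<le> 0"
    using K F3 Hm by (simp add: algebra_simps)
  have "(L - 2) * r \<ge> 0" "(L - 3) * eb \<ge> 0"
    using L3 \<open>0 \<le> eb\<close> r01 by auto
  show False
    using n012
  proof (elim disjE conjE)
    assume "n = 0" "YI = 0"
    then show False
      using Lsum \<open>YT \<le> 3\<close> L3 by simp
  next
    assume n1: "n = 1"
    show False
    proof (cases "r = 0")
      case True
      then have "0 \<ge> L^2 - 10 + (L - 2) * (e + eb - bI)"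
        using K \<open>0 \<le> bT\<close> \<open>bT \<le> r\<close> by simp
      moreover have "(L - 2) * (e + eb - bI) \<ge> 0"
        using \<open>bI \<le> e\<close> \<open>0 \<le> eb\<close> L3 by simp
      moreover have "L^2 \<ge> L + 7"
        using Hm M \<open>8 \<le> m\<close> by linarith
      ultimately show False
        using L3 by linarith
    next
      case False
      then have "(L - 2) * r \<ge> (L - 2) * 1"
        using r01 L3 by (intro mult_left_mono) auto
      then have "(L - 2) * r \<ge> L - 2"
        by simp
      then show False
        using star n1 \<open>(L - 3) * eb \<ge> 0\<close> L3 by linarith
    qed
  next
    assume "n \<ge> 2"
    then show False
      using star \<open>(L - 2) * r \<ge> 0\<close> \<open>(L - 3) * eb \<ge> 0\<close> L3 by linarith
  qed
qed

lemma two_triangles_numerics: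
  fixes L n YT YI b ET DB :: real
  assumes n6: "n \<ge> 6" and YT: "n - 1 \<le> YT" and "0 \<le> YI" and Lsum: "L = YT + YI"
    and v: "L * YT \<le> 3 * n + b" and iii: "ET - b + DB / 2 \<le> 1" and "0 \<le> b" "0 \<le> DB"
    and Lb: "L * b \<le> (n/3 + 1) * ET + (n/3) * DB" and "b \<le> ET"
  shows False
proof -
  have L1: "n - 1 \<le> L"
    using Lsum YT \<open>0 \<le> YI\<close> by linarith
  have "(n - 1) * b \<le> L * b"
    using L1 \<open>0 \<le> b\<close> by (intro mult_right_mono) auto
  moreover have "(n/3 + 1) * ET \<le> (n/3 + 1) * (b + 1)"
    using iii \<open>0 \<le> DB\<close> n6 by (intro mult_left_mono) auto
  moreover have "(n/3) * DB \<le> (n/3) * 2"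
    using iii \<open>b \<le> ET\<close> n6 by (intro mult_left_mono) auto
  ultimately have "(n - 1) * b \<le> (n/3 + 1) * (b + 1) + (n/3) * 2"
    using Lb by linarith
  then have upper: "b * (2 * n - 6) \<le> 3 * (n + 1)"
    by (simp add: algebra_simps field_simps)
  have "(n - 1) * (n - 1) \<le> L * YT"
    using L1 YT n6 by (intro mult_mono) auto
  moreover have "n * n \<ge> 6 * n"
    using n6 by (intro mult_right_mono) auto
  ultimately have "b \<ge> n + 1"
    using v by (simp add: algebra_simps)
  then have "(n + 1) * (2 * n - 6) \<le> b * (2 * n - 6)"
    using n6 by (intro mult_right_mono) auto
  moreover have "(n + 1) * 6 \<le> (n + 1) * (2 * n - 6)"
    using n6 by (intro mult_left_mono) auto
  ultimately have "(n + 1) * 6 \<le> 3 * (n + 1)"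
    using upper by (meson order_trans)
  then show False
    using n6 by simp
qed

locale triangle_link = fan_free_eigenvector +
  fixes u :: 'a
  assumes u: "u \<in> V" and y_u: "y u = 1" and no_non_triangle: "\<not> link_has_non_triangle u"
begin

definition isolated_part :: "'a set" where
  "isolated_part = nbrs u - triangle_vertices u"

definition outer_sum :: "'a \<Rightarrow> real" where
  "outer_sum w = (\<Sum>x\<in>non_nbrs u. adj E w x * y x)"

lemma link_nbrs_isolated_part: "w \<in> isolated_part \<Longrightarrow> link_nbrs u w = {}"
  using no_non_triangle by (auto simp: isolated_part_def triangle_vertices_def link_has_non_triangle_def)

lemma finite_isolated_part: "finite isolated_part"
  using finite_nbrs by (simp add: isolated_part_def)

lemma nbrs_parts: "nbrs u = triangle_vertices u \<union> isolated_part"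
  using triangle_vertices_subset by (auto simp: isolated_part_def)

lemma parts_disjoint: "triangle_vertices u \<inter> isolated_part = {}"
  by (auto simp: isolated_part_def)

lemma sum_nbrs_parts:
  "(\<Sum>w\<in>nbrs u. f w) = (\<Sum>w\<in>triangle_vertices u. f w) + (\<Sum>w\<in>isolated_part. f w)"
  by (subst nbrs_parts) (intro sum.union_disjoint finite_triangle_vertices finite_isolated_part parts_disjoint)

lemma deg_in_nbrs_parts:
  "deg_in (nbrs u) x = deg_in (triangle_vertices u) x + deg_in isolated_part x"
  unfolding deg_in_def by (rule sum_nbrs_parts)

lemma card_nbrs_parts: "card (nbrs u) = card (triangle_vertices u) + card isolated_part"
  by (subst nbrs_parts) (intro card_Un_disjoint finite_triangle_vertices finite_isolated_part parts_disjoint)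

lemma eigenvalue_parts: "lam = (\<Sum>w\<in>triangle_vertices u. y w) + (\<Sum>w\<in>isolated_part. y w)"
  using eigenvalue_sum_nbrs[OF u y_u] sum_nbrs_parts by simp

lemma eigen_isolated_part: "w \<in> isolated_part \<Longrightarrow> lam * y w = 1 + outer_sum w"
  using eigen_nbr[OF u y_u, of w] link_nbrs_isolated_part by (simp add: isolated_part_def outer_sum_def)

lemma eigen_triangle_vertex:
  "w \<in> nbrs u \<Longrightarrow> link_nbrs u w = {a,b} \<Longrightarrow> a \<noteq> b \<Longrightarrow> lam * y w = 1 + y a + y b + outer_sum w"
  using eigen_nbr[OF u y_u, of w] by (simp add: outer_sum_def)

lemma sum_outer_sum: "(\<Sum>w\<in>X. outer_sum w) = (\<Sum>x\<in>non_nbrs u. deg_in X x * y x)"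
  unfolding outer_sum_def deg_in_def sum_distrib_right by (subst sum.swap) (simp add: adj_commute)

lemma card_edges_parts:
  "real (card E) = 2 * card (triangle_vertices u) + card isolated_part
     + (\<Sum>x\<in>non_nbrs u. deg_in (triangle_vertices u) x) + (\<Sum>x\<in>non_nbrs u. deg_in isolated_part x)
     + (\<Sum>x\<in>non_nbrs u. deg_in (non_nbrs u) x) / 2"
proof -
  have "(\<Sum>w\<in>triangle_vertices u. deg_in (nbrs u) w) = (\<Sum>w\<in>triangle_vertices u. 2)"
    using card_link_nbrs_triangle by (intro sum.cong) (auto simp: triangle_vertices_def deg_nbrs_eq_card_link)
  moreover have "(\<Sum>w\<in>isolated_part. deg_in (nbrs u) w) = 0"
    using link_nbrs_isolated_part by (simp add: deg_nbrs_eq_card_link)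
  ultimately show ?thesis
    using card_edges_split[OF u] sum_nbrs_parts[of "deg_in (nbrs u)"] card_nbrs_parts
    by (simp add: deg_in_nbrs_parts sum.distrib)
qed

lemma eigen_non_nbr_parts:
  assumes x: "x \<in> non_nbrs u"
  shows "lam * y x \<le> deg_in (triangle_vertices u) x + (\<Sum>w\<in>isolated_part. adj E x w * y w)
           + deg_in (non_nbrs u) x"
proof -
  have "(\<Sum>w\<in>triangle_vertices u. adj E x w * y w) \<le> deg_in (triangle_vertices u) x"
    using triangle_vertices_subset nbrs_subset by (intro sum_adj_le_deg_in) blast
  moreover have "(\<Sum>w\<in>non_nbrs u. adj E x w * y w) \<le> deg_in (non_nbrs u) x"
    by (rule sum_adj_le_deg_in[OF non_nbrs_subset])
  ultimately show ?thesis
    using eigen_non_nbr[OF u x] sum_nbrs_parts[of "\<lambda>w. adj E x w * y w"] by linarith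
qed

lemma sum_outer_triangle_bound:
  "lam * (\<Sum>x\<in>non_nbrs u. deg_in (triangle_vertices u) x * y x)
     \<le> (\<Sum>x\<in>non_nbrs u. deg_in (triangle_vertices u) x * (deg_in (triangle_vertices u) x
            + (\<Sum>w\<in>isolated_part. adj E x w * y w) + deg_in (non_nbrs u) x))"
  unfolding sum_distrib_left
proof (intro sum_mono)
  fix x assume "x \<in> non_nbrs u"
  then have "deg_in (triangle_vertices u) x * (lam * y x)
      \<le> deg_in (triangle_vertices u) x * (deg_in (triangle_vertices u) x
            + (\<Sum>w\<in>isolated_part. adj E x w * y w) + deg_in (non_nbrs u) x)"
    using eigen_non_nbr_parts deg_in_nonneg by (intro mult_left_mono) auto
  then show "lam * (deg_in (triangle_vertices u) x * y x)
      \<le> deg_in (triangle_vertices u) x * (deg_in (triangle_vertices u) x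
            + (\<Sum>w\<in>isolated_part. adj E x w * y w) + deg_in (non_nbrs u) x)"
    by (simp add: mult.left_commute)
qed

lemma defect_parts:
  "defect u = real (card (triangle_vertices u)) - (\<Sum>w\<in>triangle_vertices u. y w)
     + (\<Sum>w\<in>isolated_part. y w) + (\<Sum>x\<in>non_nbrs u. outer_weight u x)"
proof -
  have "(\<Sum>w\<in>triangle_vertices u. link_weight u w) = (\<Sum>w\<in>triangle_vertices u. 1 - y w)"
    using card_link_nbrs_triangle
    by (intro sum.cong) (auto simp: triangle_vertices_def link_weight_def deg_nbrs_eq_card_link)
  moreover have "(\<Sum>w\<in>isolated_part. link_weight u w) = (\<Sum>w\<in>isolated_part. y w)"
    using link_nbrs_isolated_part by (intro sum.cong) (auto simp: link_weight_def deg_nbrs_eq_card_link)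
  ultimately show ?thesis
    unfolding defect_def sum_nbrs_parts[of "link_weight u"] by (simp add: sum_subtractf)
qed

lemma deg_in_triangle_vertices_le:
  assumes x: "x \<in> non_nbrs u"
  shows "3 * deg_in (triangle_vertices u) x \<le> card (triangle_vertices u)"
proof -
  have "triangle_vertices u \<subseteq> V"
    using triangle_vertices_subset nbrs_subset by blast
  then show ?thesis
    using card_triangle_nbrs_bound[OF x] deg_in_card by (metis of_nat_le_iff of_nat_mult of_nat_numeral)
qed

lemma outer_bound_if_deg_le_1:
  assumes "\<And>x. x \<in> non_nbrs u \<Longrightarrow> deg_in (triangle_vertices u) x \<le> 1"
  shows "lam * (\<Sum>x\<in>non_nbrs u. deg_in (triangle_vertices u) x * y x)
    \<le> (\<Sum>x\<in>non_nbrs u. deg_in (triangle_vertices u) x) + (\<Sum>x\<in>non_nbrs u. deg_in isolated_part x)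
      + (\<Sum>x\<in>non_nbrs u. deg_in (non_nbrs u) x)"
proof -
  have "deg_in (triangle_vertices u) x * (deg_in (triangle_vertices u) x
          + (\<Sum>w\<in>isolated_part. adj E x w * y w) + deg_in (non_nbrs u) x)
        \<le> deg_in (triangle_vertices u) x + deg_in isolated_part x + deg_in (non_nbrs u) x"
    if x: "x \<in> non_nbrs u" for x
  proof -
    have s: "0 \<le> (\<Sum>w\<in>isolated_part. adj E x w * y w)"
      using adj_nonneg y_nonneg by (auto intro!: sum_nonneg mult_nonneg_nonneg)
    have "isolated_part \<subseteq> V"
      using nbrs_subset by (auto simp: isolated_part_def)
    then have "(\<Sum>w\<in>isolated_part. adj E x w * y w) \<le> deg_in isolated_part x"
      by (rule sum_adj_le_deg_in)
    then show ?thesis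
      using assms[OF x] s deg_in_nonneg[of "triangle_vertices u" x] deg_in_nonneg[of "non_nbrs u" x]
        mult_left_le_one_le[of "deg_in (triangle_vertices u) x" "deg_in (triangle_vertices u) x"]
        mult_left_le_one_le[of "\<Sum>w\<in>isolated_part. adj E x w * y w" "deg_in (triangle_vertices u) x"]
        mult_left_le_one_le[of "deg_in (non_nbrs u) x" "deg_in (triangle_vertices u) x"]
      by (simp add: distrib_left)
  qed
  then have "lam * (\<Sum>x\<in>non_nbrs u. deg_in (triangle_vertices u) x * y x)
      \<le> (\<Sum>x\<in>non_nbrs u. deg_in (triangle_vertices u) x + deg_in isolated_part x + deg_in (non_nbrs u) x)"
    using sum_outer_triangle_bound by (meson order_trans sum_mono)
  then show ?thesis
    by (simp add: sum.distrib)
qed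

lemma single_triangle_eigen:
  assumes "link_triangle u z" and "triangle_vertices u = insert z (link_nbrs u z)"
  shows "card (triangle_vertices u) = 3" "(\<Sum>w\<in>triangle_vertices u. y w) \<le> 3"
    and "lam * (\<Sum>w\<in>triangle_vertices u. y w)
      = 3 + 2 * (\<Sum>w\<in>triangle_vertices u. y w) + (\<Sum>x\<in>non_nbrs u. deg_in (triangle_vertices u) x * y x)"
proof -
  obtain a b where ab: "a \<noteq> b" "link_nbrs u z = {a,b}" "{a,b} \<in> E" "link_nbrs u a = {z,b}"
    "link_nbrs u b = {z,a}" "z \<noteq> a" "z \<noteq> b"
    using assms(1) by (rule link_triangleE)
  have T3: "triangle_vertices u = {z,a,b}"
    using assms(2) ab(2) by simp
  then show "card (triangle_vertices u) = 3"
    using ab by simp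
  have zab: "z \<in> nbrs u" "a \<in> nbrs u" "b \<in> nbrs u"
    using T3 triangle_vertices_subset by auto
  have sum3: "(\<Sum>w\<in>triangle_vertices u. f w) = f z + f a + f b" for f :: "'a \<Rightarrow> real"
    using ab T3 by (simp add: add.assoc)
  have "y z \<le> 1" "y a \<le> 1" "y b \<le> 1"
    using y_le_1 zab nbrs_subset by blast+
  then show "(\<Sum>w\<in>triangle_vertices u. y w) \<le> 3"
    by (simp add: sum3)
  show "lam * (\<Sum>w\<in>triangle_vertices u. y w)
      = 3 + 2 * (\<Sum>w\<in>triangle_vertices u. y w) + (\<Sum>x\<in>non_nbrs u. deg_in (triangle_vertices u) x * y x)"
    using eigen_triangle_vertex[OF zab(1) ab(2,1)] eigen_triangle_vertex[OF zab(2) ab(4)]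
      eigen_triangle_vertex[OF zab(3) ab(5)] ab(6,7) sum_outer_sum[of "triangle_vertices u"]
    unfolding sum3 by (simp add: algebra_simps)
qed

lemma one_link_triangle_impossible:
  assumes tz: "link_triangle u z" and T: "triangle_vertices u = insert z (link_nbrs u z)"
    and m8: "8 \<le> card E" and H: "real (card E) - 1 \<le> lam^2 - lam"
  shows False
proof -
  note T3 = single_triangle_eigen[OF tz T]
  define YT where "YT = (\<Sum>w\<in>triangle_vertices u. y w)"
  define YI where "YI = (\<Sum>w\<in>isolated_part. y w)"
  define bT where "bT = (\<Sum>x\<in>non_nbrs u. deg_in (triangle_vertices u) x * y x)"
  define bI where "bI = (\<Sum>x\<in>non_nbrs u. deg_in isolated_part x * y x)"
  define r where "r = (\<Sum>x\<in>non_nbrs u. deg_in (triangle_vertices u) x)"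
  define e where "e = (\<Sum>x\<in>non_nbrs u. deg_in isolated_part x)"
  define eb where "eb = (\<Sum>x\<in>non_nbrs u. deg_in (non_nbrs u) x) / 2"
  have Lsum: "lam = YT + YI"
    using eigenvalue_parts by (simp add: YT_def YI_def)
  have ET: "lam * YT = 3 + 2 * YT + bT"
    using T3(3) by (simp add: YT_def bT_def)
  have EI: "lam * YI = card isolated_part + bI"
    using eigen_isolated_part sum_outer_sum[of isolated_part]
    unfolding YI_def bI_def sum_distrib_left by (simp add: sum.distrib)
  have M: "real (card E) = 6 + real (card isolated_part) + r + e + eb"
    using card_edges_parts T3(1) by (simp add: r_def e_def eb_def)
  have "deg_in (triangle_vertices u) x \<le> 1" if "x \<in> non_nbrs u" for x
    using deg_in_triangle_vertices_le[OF that] T3(1) by simp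
  then have F3: "lam * bT \<le> r + e + 2 * eb"
    using outer_bound_if_deg_le_1 by (simp add: bT_def r_def e_def eb_def)
  have b: "0 \<le> bT" "bT \<le> r" "bI \<le> e"
    using sum_deg_in_y_bounds unfolding bT_def r_def bI_def e_def by auto
  have "0 \<le> eb"
    using deg_in_nonneg by (auto simp: eb_def intro!: sum_nonneg)
  have r01: "r = 0 \<or> r \<ge> 1"
    unfolding r_def using triangle_vertices_subset nbrs_subset by (intro sum_deg_in_0_or_ge_1) blast
  have "card isolated_part = 0 \<Longrightarrow> isolated_part = {}"
    using finite_isolated_part by simp
  then have n012: "real (card isolated_part) = 0 \<and> YI = 0 \<or> real (card isolated_part) = 1
      \<or> real (card isolated_part) \<ge> 2"
    by (auto simp: YI_def)
  show False
    using one_triangle_numerics[OF Lsum ET EI M F3 T3(2)[folded YT_def] b \<open>0 \<le> eb\<close> r01 n012]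
      eigenvalue_gt_3[OF m8 H eigenvalue_nonneg[OF u y_u]] m8 H by simp
qed

lemma sum_eigen_triangle_vertices_le:
  "lam * (\<Sum>w\<in>triangle_vertices u. y w)
     \<le> 3 * card (triangle_vertices u) + (\<Sum>x\<in>non_nbrs u. deg_in (triangle_vertices u) x * y x)"
proof -
  have "lam * y w \<le> 3 + outer_sum w" if "w \<in> triangle_vertices u" for w
  proof -
    have "card (link_nbrs u w) = 2"
      using that card_link_nbrs_triangle by (simp add: triangle_vertices_def)
    then obtain p q where "link_nbrs u w = {p,q}" "p \<noteq> q"
      by (meson card_2_iff)
    moreover have "y p \<le> 1" "y q \<le> 1"
      using calculation(1) link_nbrs_subset nbrs_subset y_le_1 by blast+
    ultimately show ?thesis
      using eigen_triangle_vertex that triangle_vertices_subset by fastforce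
  qed
  then have "(\<Sum>w\<in>triangle_vertices u. lam * y w) \<le> (\<Sum>w\<in>triangle_vertices u. 3 + outer_sum w)"
    by (rule sum_mono)
  then show ?thesis
    by (simp add: sum.distrib sum_distrib_left sum_outer_sum)
qed

lemma sum_outer_weight_ge:
  "(\<Sum>x\<in>non_nbrs u. deg_in (triangle_vertices u) x) - (\<Sum>x\<in>non_nbrs u. deg_in (triangle_vertices u) x * y x)
     + (\<Sum>x\<in>non_nbrs u. deg_in (non_nbrs u) x) / 2 \<le> (\<Sum>x\<in>non_nbrs u. outer_weight u x)"
proof -
  have "deg_in (triangle_vertices u) x * (1 - y x) + deg_in (non_nbrs u) x / 2 \<le> outer_weight u x"
    if "x \<in> non_nbrs u" for x
  proof -
    have "y x \<le> 1"
      using that y_le_1 non_nbrs_subset by blast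
    then have "0 \<le> deg_in isolated_part x * (1 - y x)"
      using deg_in_nonneg by simp
    then show ?thesis
      by (simp add: outer_weight_def deg_in_nbrs_parts algebra_simps)
  qed
  then have "(\<Sum>x\<in>non_nbrs u. deg_in (triangle_vertices u) x * (1 - y x) + deg_in (non_nbrs u) x / 2)
      \<le> (\<Sum>x\<in>non_nbrs u. outer_weight u x)"
    by (rule sum_mono)
  then show ?thesis
    by (simp add: sum.distrib sum_subtractf algebra_simps sum_divide_distrib)
qed

lemma outer_bound_by_card:
  assumes YI: "(\<Sum>w\<in>isolated_part. y w) \<le> 1"
  defines "n \<equiv> real (card (triangle_vertices u))"
  shows "lam * (\<Sum>x\<in>non_nbrs u. deg_in (triangle_vertices u) x * y x)
    \<le> (n/3 + 1) * (\<Sum>x\<in>non_nbrs u. deg_in (triangle_vertices u) x)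
      + (n/3) * (\<Sum>x\<in>non_nbrs u. deg_in (non_nbrs u) x)"
proof -
  have "deg_in (triangle_vertices u) x * (deg_in (triangle_vertices u) x
          + (\<Sum>w\<in>isolated_part. adj E x w * y w) + deg_in (non_nbrs u) x)
        \<le> (n/3 + 1) * deg_in (triangle_vertices u) x + (n/3) * deg_in (non_nbrs u) x"
    if x: "x \<in> non_nbrs u" for x
  proof -
    have d: "0 \<le> deg_in (triangle_vertices u) x" "deg_in (triangle_vertices u) x \<le> n/3"
      using deg_in_nonneg deg_in_triangle_vertices_le[OF x] by (auto simp: n_def)
    have "(\<Sum>w\<in>isolated_part. adj E x w * y w) \<le> (\<Sum>w\<in>isolated_part. y w)"
      using adj_le_1 adj_nonneg y_nonneg by (intro sum_mono mult_left_le_one_le) auto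
    then have "(\<Sum>w\<in>isolated_part. adj E x w * y w) \<le> 1"
      using YI by linarith
    then have "deg_in (triangle_vertices u) x * (\<Sum>w\<in>isolated_part. adj E x w * y w)
        \<le> deg_in (triangle_vertices u) x"
      using d(1) mult_left_le[of _ "deg_in (triangle_vertices u) x"] by simp
    moreover have "deg_in (triangle_vertices u) x * deg_in (triangle_vertices u) x
        \<le> (n/3) * deg_in (triangle_vertices u) x"
      using d by (intro mult_right_mono) auto
    moreover have "deg_in (triangle_vertices u) x * deg_in (non_nbrs u) x \<le> (n/3) * deg_in (non_nbrs u) x"
      using d deg_in_nonneg by (intro mult_right_mono) auto
    ultimately show ?thesis
      by (simp add: algebra_simps)
  qed
  then have "lam * (\<Sum>x\<in>non_nbrs u. deg_in (triangle_vertices u) x * y x)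
      \<le> (\<Sum>x\<in>non_nbrs u. (n/3 + 1) * deg_in (triangle_vertices u) x + (n/3) * deg_in (non_nbrs u) x)"
    using sum_outer_triangle_bound by (meson order_trans sum_mono)
  then show ?thesis
    by (simp add: sum.distrib sum_distrib_left)
qed

lemma two_link_triangles_impossible:
  assumes z: "z \<in> nbrs u" "link_triangle u z" and z': "z' \<in> nbrs u" "link_triangle u z'"
    and zz': "z' \<notin> insert z (link_nbrs u z)"
    and H: "real (card E) - 1 \<le> lam^2 - lam"
  shows False
proof -
  define n where "n = real (card (triangle_vertices u))"
  define YT where "YT = (\<Sum>w\<in>triangle_vertices u. y w)"
  define YI where "YI = (\<Sum>w\<in>isolated_part. y w)"
  define b where "b = (\<Sum>x\<in>non_nbrs u. deg_in (triangle_vertices u) x * y x)"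
  define ET where "ET = (\<Sum>x\<in>non_nbrs u. deg_in (triangle_vertices u) x)"
  define DB where "DB = (\<Sum>x\<in>non_nbrs u. deg_in (non_nbrs u) x)"
  define X where "X = (\<Sum>x\<in>non_nbrs u. outer_weight u x)"
  have "YT \<le> n"
    using sum_mono[of "triangle_vertices u" y "\<lambda>_. 1"] y_le_1 triangle_vertices_subset nbrs_subset
    by (force simp: YT_def n_def)
  moreover have "0 \<le> YI" "0 \<le> X"
    using y_nonneg outer_weight_nonneg by (auto simp: YI_def X_def intro!: sum_nonneg)
  moreover have "n - YT + YI + X \<le> 1"
    using defect_parts defect_le_1[OF u y_u H] by (simp add: n_def YT_def YI_def X_def)
  ultimately have YT: "n - 1 \<le> YT" and "YI \<le> 1" and "X \<le> 1"
    by linarith+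
  have "lam = YT + YI"
    using eigenvalue_parts by (simp add: YT_def YI_def)
  moreover have "6 \<le> n"
    using card_triangle_vertices_ge_6[OF z z' zz'] by (simp add: n_def)
  moreover have "lam * YT \<le> 3 * n + b"
    using sum_eigen_triangle_vertices_le by (simp add: YT_def n_def b_def)
  moreover have "ET - b + DB / 2 \<le> 1"
    using sum_outer_weight_ge \<open>X \<le> 1\<close> by (simp add: ET_def b_def DB_def X_def)
  moreover have "lam * b \<le> (n/3 + 1) * ET + (n/3) * DB"
    using outer_bound_by_card \<open>YI \<le> 1\<close> by (simp add: YI_def n_def b_def ET_def DB_def)
  moreover have "0 \<le> b" "b \<le> ET" "0 \<le> DB"
    using sum_deg_in_y_bounds deg_in_nonneg by (auto simp: b_def ET_def DB_def intro!: sum_nonneg)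
  ultimately show False
    using two_triangles_numerics[of n YT YI lam b ET DB] YT \<open>0 \<le> YI\<close> by blast
qed

lemma triangle_link_impossible:
  assumes m8: "8 \<le> card E" and H: "real (card E) - 1 \<le> lam^2 - lam"
  shows False
proof (cases "triangle_vertices u = {}")
  case True
  have "lam > 3"
    using eigenvalue_gt_3[OF m8 H eigenvalue_nonneg[OF u y_u]] .
  moreover have "lam \<le> defect u"
    using True defect_parts eigenvalue_parts outer_weight_nonneg
    by (simp add: sum_nonneg)
  ultimately show False
    using defect_le_1[OF u y_u H] by simp
next
  case False
  then obtain z where z: "z \<in> nbrs u" "link_triangle u z"
    by (auto simp: triangle_vertices_def)
  show False
  proof (cases "triangle_vertices u = insert z (link_nbrs u z)")
    case True
    then show False
      using one_link_triangle_impossible[OF z(2) _ m8 H] by blast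
  next
    case False
    then obtain z' where "z' \<in> nbrs u" "link_triangle u z'" "z' \<notin> insert z (link_nbrs u z)"
      using link_triangle_component_subset[OF z(2,1)] by (auto simp: triangle_vertices_def)
    then show False
      using two_link_triangles_impossible[OF z] H by blast
  qed
qed

end

context fan_free_eigenvector
begin

lemma link_has_non_triangle_if_large:
  assumes "u \<in> V" "y u = 1" "8 \<le> card E" "real (card E) - 1 \<le> lam^2 - lam"
  shows "link_has_non_triangle u"
proof (rule ccontr)
  assume "\<not> link_has_non_triangle u"
  with assms(1,2) interpret triangle_link V E y lam u
    by unfold_locales
  show False
    using triangle_link_impossible assms(3,4) by blast
qed

lemma eigenvalue_sq_minus_le:
  assumes "u \<in> V" "y u = 1" "8 \<le> card E"
  shows "lam^2 - lam \<le> real (card E) - 1"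
  using link_has_non_triangle_if_large[OF assms] defect_ge_1 eigenvalue_defect_identity[OF assms(1,2)]
  by fastforce

end

locale extremal_vertex = fan_free_eigenvector +
  fixes u :: 'a
  assumes u: "u \<in> V" and y_u: "y u = 1" and large: "8 \<le> card E"
    and extremal: "lam^2 - lam = real (card E) - 1"
begin

lemma extremal_eigenvalue_gt_3: "lam > 3"
  using eigenvalue_gt_3[OF large _ eigenvalue_nonneg[OF u y_u]] extremal by simp

lemma sum_shifted_weight_eq_1: "(\<Sum>z\<in>nbrs u. shifted_weight u z) = 1"
  and sum_outer_weight_eq_0: "(\<Sum>x\<in>non_nbrs u. outer_weight u x) = 0"
proof -
  have "1 \<le> (\<Sum>z\<in>nbrs u. shifted_weight u z)"
    using sum_shifted_weight_ge_1 link_has_non_triangle_if_large[OF u y_u large] extremal by simp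
  moreover have "0 \<le> (\<Sum>x\<in>non_nbrs u. outer_weight u x)"
    using outer_weight_nonneg by (simp add: sum_nonneg)
  moreover have "defect u = 1"
    using eigenvalue_defect_identity[OF u y_u] extremal by simp
  ultimately show "(\<Sum>z\<in>nbrs u. shifted_weight u z) = 1" "(\<Sum>x\<in>non_nbrs u. outer_weight u x) = 0"
    using defect_eq_shifted[of u] by linarith+
qed

lemma outer_weight_eq_0D:
  assumes x: "x \<in> non_nbrs u"
  shows "deg_in (non_nbrs u) x = 0" and "deg_in (nbrs u) x = 0 \<or> y x = 1"
proof -
  have "outer_weight u x = 0"
    using sum_outer_weight_eq_0 outer_weight_nonneg finite_non_nbrs sum_nonneg_eq_0_iff x by blast
  moreover have "y x \<le> 1"
    using x non_nbrs_subset y_le_1 by blast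
  then have "0 \<le> deg_in (nbrs u) x * (1 - y x)"
    using deg_in_nonneg by simp
  ultimately have "deg_in (nbrs u) x * (1 - y x) = 0" "deg_in (non_nbrs u) x = 0"
    using deg_in_nonneg[of "non_nbrs u" x] unfolding outer_weight_def by linarith+
  then show "deg_in (non_nbrs u) x = 0" "deg_in (nbrs u) x = 0 \<or> y x = 1"
    by auto
qed

lemma non_nbrs_independent: "x \<in> non_nbrs u \<Longrightarrow> non_nbrs u \<inter> nbrs x = {}"
  using outer_weight_eq_0D(1) deg_in_eq_0_iff[OF non_nbrs_subset] by blast

lemma link_nbrs_outer_nbr_of_triangle_vertex:
  assumes w: "w \<in> triangle_vertices u" and z: "z \<in> non_nbrs u" "z \<in> nbrs w"
  shows "link_nbrs w z = {}"
proof (rule ccontr)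
  assume "link_nbrs w z \<noteq> {}"
  then obtain v where v: "v \<in> nbrs w" "v \<in> nbrs z"
    by (auto simp: link_nbrs_def)
  have "u \<in> V" "v \<in> V"
    using u v(1) nbrs_subset by blast+
  then show False
  proof (cases rule: V_cases)
    case 1
    then show False
      using v(2) z(1) by (auto simp: non_nbrs_def nbrs_sym)
  next
    case 2
    have "link_nbrs u w \<inter> nbrs z = {}"
      using triangle_partners_not_outer_nbrs[OF w z(1)] z(2) by (simp add: nbrs_sym)
    then show False
      using 2 v by (auto simp: link_nbrs_def nbrs_sym)
  next
    case 3
    then show False
      using non_nbrs_independent[OF z(1)] v(2) by blast
  qed
qed

text \<open>A triangle vertex \<open>w\<close> of the link of \<open>u\<close> cannot also be a maximal entry of \<open>y\<close>: the
  link of \<open>w\<close> would consist of the triangle on \<open>u\<close> and the two partners of \<open>w\<close>, plus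
  isolated vertices, which is excluded by \<open>link_has_non_triangle_if_large\<close>.\<close>

lemma triangle_vertex_not_max:
  assumes w: "w \<in> nbrs u" "link_triangle u w"
  shows "y w \<noteq> 1"
proof
  assume yw: "y w = 1"
  have tw: "link_triangle w u"
    by (rule link_triangle_at_triangle_vertex[OF w])
  have "link_triangle w z" if z: "z \<in> nbrs w" "link_nbrs w z \<noteq> {}" for z
  proof -
    have "u \<in> V" "z \<in> V"
      using u z(1) nbrs_subset by blast+
    then show ?thesis
    proof (cases rule: V_cases)
      case 2
      then have "z \<in> link_nbrs w u"
        using z(1) by (simp add: link_nbrs_def nbrs_sym)
      then show ?thesis
        using link_triangle_nbr[OF tw] by blast
    next
      case 3
      then show ?thesis
        using link_nbrs_outer_nbr_of_triangle_vertex[of w z] w z by (simp add: triangle_vertices_def)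
    qed (use tw in simp)
  qed
  then have "\<not> link_has_non_triangle w"
    by (auto simp: link_has_non_triangle_def)
  moreover have "w \<in> V"
    using w(1) nbrs_subset by blast
  ultimately show False
    using link_has_non_triangle_if_large[of w] yw large extremal by simp
qed

lemma shifted_weight_eq_0_outside:
  assumes W: "W \<subseteq> nbrs u" "1 \<le> (\<Sum>z\<in>W. shifted_weight u z)" and v: "v \<in> nbrs u - W"
  shows "shifted_weight u v = 0"
proof -
  have "(\<Sum>z\<in>nbrs u. shifted_weight u z) = (\<Sum>z\<in>W. shifted_weight u z) + (\<Sum>z\<in>nbrs u - W. shifted_weight u z)"
    using W(1) finite_nbrs by (metis add.commute sum.subset_diff)
  moreover have "0 \<le> (\<Sum>z\<in>nbrs u - W. shifted_weight u z)"
    using shifted_weight_nonneg by (intro sum_nonneg) auto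
  ultimately have "(\<Sum>z\<in>nbrs u - W. shifted_weight u z) = 0"
    using sum_shifted_weight_eq_1 W(2) by linarith
  then show ?thesis
    using sum_nonneg_eq_0_iff[of "nbrs u - W" "shifted_weight u"] finite_nbrs shifted_weight_nonneg v by auto
qed

lemma shifted_weight_eq_0_leaf:
  assumes v: "v \<in> nbrs u" and "shifted_weight u v = 0"
  obtains c where "link_nbrs u v = {c}" "star_centre u c"
  using v
proof (cases rule: link_vertex_cases)
  case isolated
  then show ?thesis
    using shifted_weight_isolated assms(2) y_pos_nbr[OF u y_u v] by simp
next
  case (leaf c)
  then have "card (link_nbrs u c) \<noteq> 1"
    using shifted_weight_leaf[OF leaf] assms(2) by (simp add: leaf_ind_def split: if_splits)
  then show ?thesis
    using that leaf leaf_nbr_is_star_centre[OF v leaf] by blast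
next
  case centre
  then show ?thesis
    using shifted_weight_star_centre_ge_1 assms(2) v nbrs_subset y_le_1 by fastforce
next
  case triangle
  then show ?thesis
    using shifted_weight_triangle assms(2) triangle_vertex_not_max[OF v] by simp
qed

lemma star_centre_weight_ge_1: "c \<in> nbrs u \<Longrightarrow> star_centre u c \<Longrightarrow> 1 \<le> shifted_weight u c"
  using shifted_weight_star_centre_ge_1 nbrs_subset y_le_1 by blast

text \<open>A component of the link consisting of a single edge \<open>z w\<close> would already carry all the
  weight. Every other vertex would then be a leaf of some star whose centre carries weight at
  least \<open>1\<close> as well, so \<open>N(u) = {z, w}\<close> and \<open>\<lambda> = y z + y w \<le> 2\<close>, contradicting \<open>\<lambda> > 3\<close>.\<close>

lemma no_link_edge_component:
  assumes z: "z \<in> nbrs u" and zw: "link_nbrs u z = {w}" and wz: "link_nbrs u w = {z}"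
  shows False
proof -
  have wA: "w \<in> nbrs u" and "z \<noteq> w"
    using zw link_nbrs_subset not_self_link_nbr[of z u] by auto
  moreover have "shifted_weight u z = 1/2" "shifted_weight u w = 1/2"
    using zw wz shifted_weight_leaf by (simp_all add: leaf_ind_def)
  ultimately have W: "{z,w} \<subseteq> nbrs u" "1 \<le> (\<Sum>x\<in>{z,w}. shifted_weight u x)"
    using z by auto
  have "nbrs u = {z,w}"
  proof (rule ccontr)
    assume "nbrs u \<noteq> {z,w}"
    then obtain v where v: "v \<in> nbrs u - {z,w}"
      using W(1) by blast
    obtain c where c: "link_nbrs u v = {c}" "star_centre u c"
      using shifted_weight_eq_0_leaf shifted_weight_eq_0_outside[OF W v] v by blast
    have "c \<in> nbrs u"
      using c(1) link_nbrs_subset by blast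
    moreover have "c \<noteq> z" "c \<noteq> w"
      using c(2) zw wz by (auto simp: star_centre_def)
    ultimately show False
      using shifted_weight_eq_0_outside[OF W] star_centre_weight_ge_1 c(2) by fastforce
  qed
  then have "lam = y z + y w"
    using eigenvalue_sum_nbrs[OF u y_u] \<open>z \<noteq> w\<close> by simp
  moreover have "y z \<le> 1" "y w \<le> 1"
    using z wA nbrs_subset y_le_1 by blast+
  ultimately show False
    using extremal_eigenvalue_gt_3 by simp
qed

lemma exists_star_centre: "\<exists>c\<in>nbrs u. star_centre u c"
proof -
  obtain z where z: "z \<in> nbrs u" "link_nbrs u z \<noteq> {}" "\<not> link_triangle u z"
    using link_has_non_triangle_if_large[OF u y_u large] extremal link_has_non_triangle_def by auto
  from z(1) show ?thesis
  proof (cases rule: link_vertex_cases)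
    case (leaf w)
    have "w \<in> nbrs u" "z \<in> link_nbrs u w"
      using leaf link_nbrs_subset link_nbrs_sym[of w u z] z(1) by auto
    moreover have "card (link_nbrs u w) \<noteq> 1"
      using no_link_edge_component[OF z(1) leaf] \<open>z \<in> link_nbrs u w\<close>
      by (metis card_1_singletonE singletonD)
    ultimately show ?thesis
      using leaf_nbr_is_star_centre[OF z(1) leaf] by blast
  qed (use z in auto)
qed

lemma link_is_star:
  obtains c where "c \<in> nbrs u" "star_centre u c" "y c = 1" "nbrs u = insert c (link_nbrs u c)"
    "\<And>w. w \<in> link_nbrs u c \<Longrightarrow> link_nbrs u w = {c}"
proof -
  obtain c where c: "c \<in> nbrs u" "star_centre u c"
    using exists_star_centre by blast
  have W: "{c} \<subseteq> nbrs u" "1 \<le> (\<Sum>x\<in>{c}. shifted_weight u x)"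
    using c star_centre_weight_ge_1 by auto
  have leaves: "link_nbrs u v = {c}" if v: "v \<in> nbrs u - {c}" for v
  proof -
    obtain c' where c': "link_nbrs u v = {c'}" "star_centre u c'"
      using shifted_weight_eq_0_leaf shifted_weight_eq_0_outside[OF W v] v by blast
    have "c' \<in> nbrs u"
      using c'(1) link_nbrs_subset by blast
    then have "c' = c"
      using shifted_weight_eq_0_outside[OF W] star_centre_weight_ge_1 c'(2) by fastforce
    then show ?thesis
      using c'(1) by simp
  qed
  have star: "nbrs u = insert c (link_nbrs u c)"
  proof (intro equalityI subsetI)
    fix v assume "v \<in> nbrs u"
    then show "v \<in> insert c (link_nbrs u c)"
      using leaves link_nbrs_sym[of c u v] by (cases "v = c") auto
  qed (use c(1) link_nbrs_subset in auto)
  have "(\<Sum>z\<in>nbrs u. shifted_weight u z) = shifted_weight u c"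
    using shifted_weight_eq_0_outside[OF W] c(1) finite_nbrs by (simp add: sum.remove)
  then have "real (card (link_nbrs u c)) - (real (card (link_nbrs u c)) - 1) * y c = 1"
    using sum_shifted_weight_eq_1 shifted_weight_star_centre[OF c(2)] by simp
  then have "(real (card (link_nbrs u c)) - 1) * (1 - y c) = 0"
    by (simp add: algebra_simps)
  then have "y c = 1"
    using c(2) by (simp add: star_centre_def)
  moreover have "link_nbrs u w = {c}" if "w \<in> link_nbrs u c" for w
    using that leaves not_self_link_nbr link_nbrs_subset by blast
  ultimately show ?thesis
    using that c star by blast
qed

lemma non_nbr_adjacent_covers:
  assumes x: "x \<in> non_nbrs u" and "nbrs u \<inter> nbrs x \<noteq> {}"
  shows "nbrs u \<subseteq> nbrs x"
proof -
  have "deg_in (nbrs u) x \<noteq> 0"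
    using assms(2) deg_in_eq_0_iff[OF nbrs_subset] by auto
  then have "y x = 1"
    using outer_weight_eq_0D(2)[OF x] by simp
  have "(\<Sum>w\<in>nbrs u. adj E x w * y w) = (\<Sum>w\<in>nbrs u \<inter> nbrs x. y w)"
    by (rule sum_adj_nbrs[OF nbrs_subset])
  moreover have "(\<Sum>w\<in>non_nbrs u. adj E x w * y w) = 0"
    using sum_adj_nbrs[OF non_nbrs_subset] non_nbrs_independent[OF x] by simp
  ultimately have "lam = (\<Sum>w\<in>nbrs u \<inter> nbrs x. y w)"
    using eigen_non_nbr[OF u x] \<open>y x = 1\<close> by simp
  moreover have "(\<Sum>w\<in>nbrs u. y w) = (\<Sum>w\<in>nbrs u - nbrs u \<inter> nbrs x. y w) + (\<Sum>w\<in>nbrs u \<inter> nbrs x. y w)"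
    using finite_nbrs by (intro sum.subset_diff) auto
  ultimately have "(\<Sum>w\<in>nbrs u - nbrs u \<inter> nbrs x. y w) = 0"
    using eigenvalue_sum_nbrs[OF u y_u] by simp
  then have y0: "y w = 0" if "w \<in> nbrs u - nbrs x" for w
    using sum_nonneg_eq_0_iff[of "nbrs u - nbrs u \<inter> nbrs x" y] finite_nbrs y_nonneg that by auto
  show ?thesis
  proof
    fix w assume "w \<in> nbrs u"
    then show "w \<in> nbrs x"
      using y0[of w] y_pos_nbr[OF u y_u, of w] by (cases "w \<in> nbrs x") auto
  qed
qed

text \<open>If \<open>x \<notin> N[u]\<close> were adjacent to all of \<open>N(u)\<close>, then a star centre \<open>c\<close> of the link would
  be the centre of the fan with path \<open>u l\<^sub>1 x l\<^sub>2\<close> for two leaves \<open>l\<^sub>1, l\<^sub>2\<close> of \<open>c\<close>.\<close>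

lemma not_nbrs_subset_non_nbr:
  assumes x: "x \<in> non_nbrs u"
  shows "\<not> nbrs u \<subseteq> nbrs x"
proof
  assume Ax: "nbrs u \<subseteq> nbrs x"
  obtain c where c: "c \<in> nbrs u" "star_centre u c"
    using exists_star_centre by blast
  have c2: "card (link_nbrs u c) \<ge> 2"
    using c(2) by (simp add: star_centre_def)
  then obtain l1 where l1: "l1 \<in> link_nbrs u c"
    by fastforce
  obtain l2 where l2: "l2 \<in> link_nbrs u c" "l2 \<noteq> l1"
    using card_ge_2_obtain_other[OF finite_link_nbrs c2 l1] by blast
  have l: "l1 \<in> nbrs u" "l2 \<in> nbrs u"
    using l1 l2 link_nbrs_subset by blast+
  show False
  proof (rule no_fan[of c u l1 x l2])
    show "{c,u} \<in> E" "{u,l1} \<in> E"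
      using edge_to_nbr c(1) l by (auto simp: insert_commute)
    show "{c,l1} \<in> E" "{c,l2} \<in> E"
      using link_nbrs_edge l1 l2(1) by blast+
    have "c \<in> nbrs x" "l1 \<in> nbrs x" "l2 \<in> nbrs x"
      using Ax c(1) l by blast+
    then show "{c,x} \<in> E" "{l1,x} \<in> E" "{x,l2} \<in> E"
      by (simp_all add: nbrs_iff insert_commute)
    show "u \<noteq> x" "u \<noteq> l2"
      using x l not_self_non_nbr not_self_nbr by blast+
  qed (use l2(2) in simp)
qed

lemma non_nbrs_isolated:
  assumes x: "x \<in> non_nbrs u"
  shows "nbrs x = {}"
proof -
  have "nbrs u \<inter> nbrs x = {}"
    using non_nbr_adjacent_covers[OF x] not_nbrs_subset_non_nbr[OF x] by blast
  moreover have "non_nbrs u \<inter> nbrs x = {}"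
    by (rule non_nbrs_independent[OF x])
  moreover have "u \<notin> nbrs x"
    using x by (auto simp: non_nbrs_def nbrs_sym)
  moreover have "nbrs x \<subseteq> insert u (nbrs u \<union> non_nbrs u)"
    using nbrs_subset V_split[OF u] by simp
  ultimately show ?thesis
    by blast
qed

end

lemma book_E_memI:
  assumes "a < 2" "a \<noteq> b" "b < k + 2"
  shows "{a,b} \<in> book_E k"
proof (cases "b < 2")
  case True
  then have "a = 0 \<and> b = 1 \<or> a = 1 \<and> b = 0"
    using assms(1,2) by linarith
  then have "{a,b} = {0,1}"
    by auto
  then show ?thesis
    by (simp add: book_E_def)
next
  case False
  then have "2 \<le> b"
    by simp
  then have "{0,b} \<in> book_E k" "{1,b} \<in> book_E k"
    using assms(3) unfolding book_E_def by blast+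
  moreover have "a = 0 \<or> a = 1"
    using assms(1) by linarith
  ultimately show ?thesis
    by auto
qed
lemma book_E_iff:
  assumes "i < k + 2" "j < k + 2"
  shows "{i,j} \<in> book_E k \<longleftrightarrow> i \<noteq> j \<and> (i < 2 \<or> j < 2)"
proof
  assume "{i,j} \<in> book_E k"
  then obtain a b where ab: "{i,j} = {a,b}" "a < 2" "a \<noteq> b"
    unfolding book_E_def by auto
  then have "i \<noteq> j"
    by (metis doubleton_eq_iff)
  moreover have "i < 2 \<or> j < 2"
    using ab by (metis doubleton_eq_iff)
  ultimately show "i \<noteq> j \<and> (i < 2 \<or> j < 2)"
    by blast
next
  assume "i \<noteq> j \<and> (i < 2 \<or> j < 2)"
  then show "{i,j} \<in> book_E k"
    using book_E_memI[of i j k] book_E_memI[of j i k] assms by (metis insert_commute)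
qed
lemma book_row_sum:
  fixes \<mu> :: real
  assumes i: "i < k + 2"
  shows "(\<Sum>j\<in>{0..<k+2}. if {i,j} \<in> book_E k then (if j < 2 then 1 else 2 / \<mu>) else 0)
         = (if i < 2 then 1 + 2 * real k / \<mu> else 2)"
proof -
  define f where "f j = (if {i,j} \<in> book_E k then (if j < 2 then 1 else 2 / \<mu>) else 0 :: real)" for j
  have f: "f j = (if i \<noteq> j \<and> (i < 2 \<or> j < 2) then (if j < 2 then 1 else 2 / \<mu>) else 0)"
    if "j < k + 2" for j
    using book_E_iff[OF i that] by (simp add: f_def)
  have "{0..<k+2} = {0,1} \<union> {2..<k+2}"
    by auto
  then have "(\<Sum>j\<in>{0..<k+2}. f j) = f 0 + f 1 + (\<Sum>j\<in>{2..<k+2}. f j)"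
    by (simp add: sum.union_disjoint)
  moreover have "(\<Sum>j\<in>{2..<k+2}. f j) = (\<Sum>j\<in>{2..<k+2}. if i < 2 then 2 / \<mu> else 0)"
    using f by (intro sum.cong) auto
  moreover have "f 0 + f 1 = (if i < 2 then 1 else 2)"
    using f[of 0] f[of 1] by (cases "i = 0"; cases "i = 1") auto
  ultimately show ?thesis
    by (simp add: f_def)
qed
lemma book_labelling:
  assumes "finite L" "u \<noteq> c" "u \<notin> L" "c \<notin> L"
  obtains f where "bij_betw f (insert u (insert c L)) (book_V (card L))" "f u = 0" "f c = 1"
    "\<And>l. l \<in> L \<Longrightarrow> 2 \<le> f l"
proof -
  obtain g where g: "bij_betw g L {2..<card L + 2}"
    using finite_same_card_bij[OF assms(1), of "{2..<card L + 2}"] by auto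
  define f where "f v = (if v = u then 0 else if v = c then 1 else g v)" for v
  have "bij_betw f L {2..<card L + 2}"
    using g assms(3,4) by (subst bij_betw_cong[of L f g]) (auto simp: f_def)
  moreover have "bij_betw f {u,c} {0,1}"
    using assms(2) by (auto simp: f_def bij_betw_def)
  ultimately have "bij_betw f ({u,c} \<union> L) ({0,1} \<union> {2..<card L + 2})"
    by (intro bij_betw_combine) auto
  moreover have "{u,c} \<union> L = insert u (insert c L)" "{0,1} \<union> {2..<card L + 2} = book_V (card L)"
    by (auto simp: book_V_def)
  moreover have "2 \<le> f l" if "l \<in> L" for l
    using that g assms(3,4) by (auto simp: f_def bij_betw_def)
  ultimately show ?thesis
    using that assms(2) by (simp add: f_def)
qed

context finite_simple_graph
begin

lemma non_isolated_eq: "non_isolated V E = {v\<in>V. nbrs v \<noteq> {}}"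
proof -
  have "(\<exists>e\<in>E. v \<in> e) \<longleftrightarrow> nbrs v \<noteq> {}" if "v \<in> V" for v
  proof
    assume "\<exists>e\<in>E. v \<in> e"
    then obtain e where e: "e \<in> E" "v \<in> e"
      by blast
    then obtain p q where pq: "e = {p,q}"
      using edge_card_subset[OF e(1)] by (meson card_2_iff)
    then have "q \<in> nbrs p" "p \<in> nbrs q"
      using e(1) by (simp_all add: nbrs_iff insert_commute)
    then show "nbrs v \<noteq> {}"
      using e(2) pq by auto
  qed (auto simp: nbrs_iff)
  then show ?thesis
    by (auto simp: non_isolated_def)
qed

text \<open>Recognising \<open>K\<^sub>2 \<or> kK\<^sub>1\<close> (up to isolated vertices) from the neighbourhoods of its
  vertices: \<open>u, c\<close> span the spine and \<open>L\<close> is the set of pages.\<close>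

lemma book_graph_iso:
  assumes L: "finite L" "u \<noteq> c" "u \<notin> L" "c \<notin> L"
    and Nu: "nbrs u = insert c L" and Nc: "nbrs c = insert u L" and Nl: "\<And>l. l \<in> L \<Longrightarrow> nbrs l = {u,c}"
    and isolated: "\<And>v. v \<in> V \<Longrightarrow> v \<notin> insert u (insert c L) \<Longrightarrow> nbrs v = {}"
  shows "card E = 2 * card L + 1"
    and "graph_iso (non_isolated V E) E (book_V (card L)) (book_E (card L))"
proof -
  define K where "K = insert u (insert c L)"
  have KV: "K \<subseteq> V"
    using Nu Nc nbrs_subset by (auto simp: K_def)
  have "(\<Sum>v\<in>V. deg_in V v) = (\<Sum>v\<in>V. real (card (nbrs v)))"
    using nbrs_subset by (simp add: deg_in_card Int_absorb1)
  also have "\<dots> = (\<Sum>v\<in>K. real (card (nbrs v)))"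
    by (rule sum.mono_neutral_right[OF finite_V KV]) (use isolated in \<open>auto simp: K_def\<close>)
  also have "\<dots> = real (card L + 1) + real (card L + 1) + 2 * card L"
    using L Nu Nc Nl by (simp add: K_def)
  finally show "card E = 2 * card L + 1"
    using handshake by linarith
  have NI: "non_isolated V E = K"
    using KV isolated Nu Nc Nl by (auto simp: non_isolated_eq K_def)
  obtain f where f: "bij_betw f K (book_V (card L))" "f u = 0" "f c = 1" "\<And>l. l \<in> L \<Longrightarrow> 2 \<le> f l"
    using book_labelling[OF L] unfolding K_def by blast
  have "{p,q} \<in> E \<longleftrightarrow> {f p, f q} \<in> book_E (card L)" if p: "p \<in> K" and q: "q \<in> K" for p q
  proof -
    have "f p < card L + 2" "f q < card L + 2"
      using f(1) p q by (auto simp: bij_betw_def book_V_def)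
    moreover have "f p = f q \<longleftrightarrow> p = q"
      using f(1) p q by (auto simp: bij_betw_def inj_on_eq_iff)
    moreover have "f v < 2 \<longleftrightarrow> v = u \<or> v = c" if "v \<in> K" for v
      using that f(2-4) by (fastforce simp: K_def)
    ultimately have "{f p, f q} \<in> book_E (card L) \<longleftrightarrow> p \<noteq> q \<and> (p = u \<or> p = c \<or> q = u \<or> q = c)"
      using book_E_iff p q by auto
    moreover have "{p,q} \<in> E \<longleftrightarrow> q \<in> nbrs p"
      by (simp add: nbrs_iff)
    ultimately show ?thesis
      using p q Nu Nc Nl L by (auto simp: K_def)
  qed
  then show "graph_iso (non_isolated V E) E (book_V (card L)) (book_E (card L))"
    unfolding graph_iso_def NI using f(1) by blast
qed

lemma book_eigenvalue:
  assumes iso: "graph_iso (non_isolated V E) E (book_V k) (book_E k)"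
    and \<mu>: "\<mu> > 0" "\<mu> = 1 + 2 * real k / \<mu>"
  shows "adj_eigenvalue V E \<mu>"
proof -
  define V' where "V' = non_isolated V E"
  obtain f where f: "bij_betw f V' (book_V k)"
    and fe: "\<forall>p\<in>V'. \<forall>q\<in>V'. {p,q} \<in> E \<longleftrightarrow> {f p, f q} \<in> book_E k"
    using iso unfolding graph_iso_def V'_def by blast
  have V'V: "V' \<subseteq> V"
    unfolding V'_def non_isolated_def by auto
  define x where "x v = (if v \<in> V' then (if f v < 2 then 1 else 2 / \<mu>) else 0)" for v
  have "(\<Sum>w\<in>V. adj E v w * x w) = \<mu> * x v" if v: "v \<in> V" for v
  proof (cases "v \<in> V'")
    case False
    then have "adj E v w = 0" for w
      using v unfolding V'_def non_isolated_def adj_def by auto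
    then show ?thesis
      using False by (simp add: x_def)
  next
    case True
    have fv: "f v < k + 2"
      using f True by (auto simp: bij_betw_def book_V_def)
    have "(\<Sum>w\<in>V. adj E v w * x w) = (\<Sum>w\<in>V'. adj E v w * x w)"
      by (rule sum.mono_neutral_right[OF finite_V V'V]) (auto simp: x_def)
    also have "\<dots> = (\<Sum>w\<in>V'. if {f v, f w} \<in> book_E k then (if f w < 2 then 1 else 2 / \<mu>) else 0)"
      using fe True by (intro sum.cong refl) (auto simp: adj_def x_def)
    also have "\<dots> = (\<Sum>j\<in>book_V k. if {f v, j} \<in> book_E k then (if j < 2 then 1 else 2 / \<mu>) else 0)"
      by (rule sum.reindex_bij_betw[OF f])
    also have "\<dots> = \<mu> * x v"
      using book_row_sum[OF fv, of \<mu>] True \<mu> by (auto simp: book_V_def x_def)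
    finally show ?thesis .
  qed
  moreover obtain v0 where "v0 \<in> V'" "f v0 = 0"
    using f by (metis bij_betw_def book_V_def atLeastLessThan_iff imageE le0 add_gr_0 zero_less_numeral)
  ultimately show ?thesis
    unfolding adj_eigenvalue_def using V'V by (intro exI[of _ x]) (auto simp: x_def)
qed

end

context extremal_vertex
begin

lemma extremal_is_book:
  "odd (card E) \<and> graph_iso (non_isolated V E) E (book_V ((card E - 1) div 2)) (book_E ((card E - 1) div 2))"
proof -
  obtain c where c: "c \<in> nbrs u" "star_centre u c" "y c = 1" and Nu: "nbrs u = insert c (link_nbrs u c)"
    and leaves: "\<And>w. w \<in> link_nbrs u c \<Longrightarrow> link_nbrs u w = {c}"
    by (rule link_is_star) blast
  define L where "L = link_nbrs u c"
  have L: "finite L" "u \<noteq> c" "u \<notin> L" "c \<notin> L"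
    using c(1) finite_link_nbrs link_nbrs_subset[of u c] not_self_nbr[of u] not_self_nbr[of c]
      not_self_link_nbr[of c u] by (auto simp: L_def)
  have outer_isolated: "v \<in> V \<Longrightarrow> v \<notin> insert u (nbrs u) \<Longrightarrow> nbrs v = {}" for v
    using non_nbrs_isolated by (simp add: non_nbrs_def)
  have nbrs_eq: "nbrs v = insert u (link_nbrs u v)" if "v \<in> nbrs u" for v
  proof (intro equalityI subsetI)
    fix w assume w: "w \<in> nbrs v"
    have "u \<in> V" "w \<in> V"
      using u w nbrs_subset by blast+
    then show "w \<in> insert u (link_nbrs u v)"
    proof (cases rule: V_cases)
      case 3
      then show ?thesis
        using non_nbrs_isolated w by (auto simp: nbrs_sym)
    qed (use w in \<open>auto simp: link_nbrs_def nbrs_sym\<close>)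
  qed (use that in \<open>auto simp: link_nbrs_def nbrs_sym\<close>)
  have "nbrs c = insert u L"
    using nbrs_eq[OF c(1)] by (simp add: L_def)
  moreover have "nbrs l = {u,c}" if "l \<in> L" for l
    using nbrs_eq[of l] leaves[of l] that link_nbrs_subset by (auto simp: L_def)
  moreover have "nbrs v = {}" if "v \<in> V" "v \<notin> insert u (insert c L)" for v
    using outer_isolated that Nu by (simp add: L_def)
  ultimately have "card E = 2 * card L + 1" "graph_iso (non_isolated V E) E (book_V (card L)) (book_E (card L))"
    using book_graph_iso[OF L] Nu by (simp_all add: L_def)
  then show ?thesis
    by simp
qed

end

context fan_free_eigenvector
begin

lemma extremal_graph_is_book:
  assumes "u \<in> V" "y u = 1" "8 \<le> card E" "lam^2 - lam = real (card E) - 1"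
  shows "odd (card E) \<and> graph_iso (non_isolated V E) E (book_V ((card E - 1) div 2)) (book_E ((card E - 1) div 2))"
proof -
  interpret extremal_vertex V E y lam u
    using assms by unfold_locales
  show ?thesis
    by (rule extremal_is_book)
qed

end

lemma golden_root_eq:
  fixes m :: real
  assumes "m \<ge> 1"
  shows "((1 + sqrt (4 * m - 3)) / 2)^2 - (1 + sqrt (4 * m - 3)) / 2 = m - 1"
proof -
  have "(sqrt (4 * m - 3))^2 = 4 * m - 3"
    using assms by simp
  then show ?thesis
    by (simp add: power2_eq_square field_simps)
qed

lemma le_golden_root:
  fixes L m :: real
  assumes "m \<ge> 1" and "L^2 - L \<le> m - 1"
  shows "L \<le> (1 + sqrt (4 * m - 3)) / 2"
proof (cases "2 * L - 1 \<le> 0")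
  case True
  have "0 \<le> sqrt (4 * m - 3)"
    using assms(1) by simp
  then have "2 * L \<le> 1 + sqrt (4 * m - 3)"
    using True by linarith
  then show ?thesis
    by simp
next
  case False
  have "(2 * L - 1)^2 \<le> 4 * m - 3"
    using assms(2) by (simp add: power2_eq_square algebra_simps)
  then have "sqrt ((2 * L - 1)^2) \<le> sqrt (4 * m - 3)"
    by (rule real_sqrt_le_mono)
  then show ?thesis
    using False by simp
qed

lemma book_spectral_radius_ge:
  assumes simple: "simple_graph V E" and "V \<noteq> {}" and m: "odd (card E)"
    and iso: "graph_iso (non_isolated V E) E (book_V ((card E - 1) div 2)) (book_E ((card E - 1) div 2))"
  shows "(1 + sqrt (4 * real (card E) - 3)) / 2 \<le> spectral_radius V E"
proof -
  interpret finite_simple_graph V E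
    by (rule finite_simple_graph.intro[OF simple])
  define k where "k = (card E - 1) div 2"
  define \<mu> where "\<mu> = (1 + sqrt (4 * real (card E) - 3)) / 2"
  have "card E = 2 * k + 1"
    using m by (simp add: k_def)
  moreover have "\<mu>^2 - \<mu> = real (card E) - 1"
    using golden_root_eq[of "real (card E)"] \<open>card E = 2 * k + 1\<close> by (simp add: \<mu>_def)
  moreover have "\<mu> > 0"
    using \<open>card E = 2 * k + 1\<close> by (simp add: \<mu>_def add_pos_nonneg)
  ultimately have "\<mu> = 1 + 2 * real k / \<mu>"
    by (simp add: power2_eq_square field_simps)
  then have "adj_eigenvalue V E \<mu>"
    using book_eigenvalue iso \<open>\<mu> > 0\<close> by (simp add: k_def)
  then show ?thesis
    unfolding \<mu>_def by (rule eigenvalue_le_spectral_radius[OF simple assms(2)])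
qed

lemma simple_graph_nonempty:
  assumes "simple_graph V E" and "E \<noteq> {}"
  shows "V \<noteq> {}"
proof -
  obtain e where "e \<in> E"
    using assms(2) by blast
  then have "card e = 2" "e \<subseteq> V"
    using assms(1) by (auto simp: simple_graph_def)
  then show ?thesis
    by auto
qed

theorem theorem1p4:
  fixes V :: "'a set" and E :: "'a set set" and m :: nat
  assumes "simple_graph V E"
    and "\<not> contains_subgraph fan5_V fan5_E V E"
    and "m = card E"
    and "m \<ge> 8"
  shows "spectral_radius V E \<le> (1 + sqrt (4 * real m - 3)) / 2
    \<and> (spectral_radius V E = (1 + sqrt (4 * real m - 3)) / 2 \<longleftrightarrow>
         odd m \<and> graph_iso (non_isolated V E) E (book_V ((m - 1) div 2)) (book_E ((m - 1) div 2)))"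
proof -
  have "V \<noteq> {}"
    using simple_graph_nonempty assms(1,3,4) by fastforce
  then obtain u y where "u \<in> V" "y u = 1" and eigenvector: "\<And>v. 0 \<le> y v" "\<And>v. v \<in> V \<Longrightarrow> y v \<le> 1"
    "\<And>v. v \<in> V \<Longrightarrow> (\<Sum>w\<in>V. adj E v w * y w) = spectral_radius V E * y v"
    by (rule spectral_radius_normalized_eigenvector[OF assms(1)]) blast
  interpret fan_free_eigenvector V E y "spectral_radius V E"
    using assms(1,2) eigenvector by unfold_locales
  have "(spectral_radius V E)^2 - spectral_radius V E \<le> real m - 1"
    using eigenvalue_sq_minus_le[OF \<open>u \<in> V\<close> \<open>y u = 1\<close>] assms(3,4) by simp
  then have "spectral_radius V E \<le> (1 + sqrt (4 * real m - 3)) / 2"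
    using le_golden_root assms(4) by simp
  moreover have "odd m \<and> graph_iso (non_isolated V E) E (book_V ((m - 1) div 2)) (book_E ((m - 1) div 2))"
    if "spectral_radius V E = (1 + sqrt (4 * real m - 3)) / 2"
    using extremal_graph_is_book[OF \<open>u \<in> V\<close> \<open>y u = 1\<close>] golden_root_eq[of "real m"] assms(3,4)
    unfolding that by simp
  moreover have "odd m \<and> graph_iso (non_isolated V E) E (book_V ((m - 1) div 2)) (book_E ((m - 1) div 2)) \<Longrightarrow>
      (1 + sqrt (4 * real m - 3)) / 2 \<le> spectral_radius V E"
    using book_spectral_radius_ge[OF assms(1) \<open>V \<noteq> {}\<close>] assms(3) by simp
  ultimately show ?thesis
    by linarith
qed

end
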